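(* Let $s,l,n\in\mathbb N$ with $l>s$, let $Y$, $\Pi$, $J_{l,n}$, $C_{12}$, $T$, $d$, $\chi$, $\delta_n$ be as in the context, and let $x^*\in\mathbb R$ satisfy $$\min_{i\in\mathbb Z}|x^*-y_i|\ge 2sC_{12}\frac{\pi}{n}.$$ Then, with positive constants $C_{13},C_{14},C_{15}$ depending only on $s$ and $l$: (i) $\frac12<d_{l,n}(x^*;s;Y)<\frac32$; (ii) $T(x)=\frac1{2\pi}x+\tilde T(x)$ with $\tilde T\in\mathbb T_{l(n-1)+s}$; (iii) $\Pi(x^* )T'(x)\Pi(x)\ge0$ for all $x\in\mathbb R$; (iv) $|T'(x)|\le C_{13}\,n\,\delta_n^{2(l-s)}(x;x^* )$ for all $x\in\mathbb R$; (v) $|T'(x)|\ge \frac1{C_{14}}\,n\,\delta_n^{2l}(x;x^* )\left|\frac{\Pi(x)}{\Pi(x^* )}\right|$ for all $x\in\bigcup_{\nu\in\mathbb Z}\left[x^*+\frac{2\pi\nu}{n}+\frac{\pi}{2n},\,x^*+\frac{2\pi\nu}{n}+\frac{2\pi}{n}-\frac{\pi}{2n}\right]$; (vi) $|\chi(x;x^* )-T(x)|\le C_{15}\,\delta_n^{2(l-s)-1}(x;x^* )$ for all $x$ with $|x-x^*|\le2\pi$.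
   Context: $Y=\{y_i\}_{i=1}^{2s}$ with $-\pi\le y_{2s}<\dots<y_1<\pi$, extended to all $i\in\mathbb Z$ by $y_i:=y_{i+2s}+2\pi$; $\Pi(x):=\prod_{i=1}^{2s}\sin\frac12(x-y_i)$. $\mathbb T_m$ is the space of real trigonometric polynomials of order $\le m$. Jackson-type kernel: $J_{l,n}(t):=\frac1{\gamma_{l,n}}\left(\frac{\sin(nt/2)}{\sin(t/2)}\right)^{2l}$, $\gamma_{l,n}:=\int_{-\pi}^{\pi}\left(\frac{\sin(nt/2)}{\sin(t/2)}\right)^{2l}dt$. $C_{12}=C_{12}(l)$ is a positive constant such that $\int_{-\pi}^{\pi}(1+n|t|)^{\nu}J_{l,n}(t)\,dt\le C_{12}$ for all $n\in\mathbb N$ and $\nu=0,1,\dots,2l-2$. For $x^*$ with $\Pi(x^* )\ne0$: $d_{l,n}(x^*;s;Y):=\int_{x^*-\pi}^{x^*+\pi}J_{l,n}(t-x^* )\frac{\Pi(t)}{\Pi(x^* )}dt$ and $T(x)=T_{l,n}(x;x^*;s;Y):=\frac1{d_{l,n}(x^*;s;Y)}\int_{x^*-\pi}^{x}J_{l,n}(t-x^* )\frac{\Pi(t)}{\Pi(x^* )}dt$. Further $\chi(x;x^* ):=0$ if $x\le x^*$ and $:=1$ if $x>x^*$; $\delta_n(x;x^* ):=\min\{1,\frac1{n|\sin\frac{x-x^*}2|}\}$. *)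

theory Defs
  imports "HOL-Analysis.Analysis"
begin

definition oint :: "real \<Rightarrow> real \<Rightarrow> (real \<Rightarrow> real) \<Rightarrow> real" where
  "oint a b f = (if a \<le> b then integral {a..b} f else - integral {b..a} f)"

text \<open>Extension of the nodes y_1,...,y_{2s} to all integer indices by y_i = y_{i+2s} + 2 pi.\<close>
definition yext :: "nat \<Rightarrow> (nat \<Rightarrow> real) \<Rightarrow> int \<Rightarrow> real" where
  "yext s y i = y (nat ((i - 1) mod (2 * int s) + 1)) - 2 * pi * of_int ((i - 1) div (2 * int s))"

definition Pi_Y :: "nat \<Rightarrow> (nat \<Rightarrow> real) \<Rightarrow> real \<Rightarrow> real" where
  "Pi_Y s y x = (\<Prod>i\<in>{1 .. 2 * s}. sin ((x - y i) / 2))"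

text \<open>(sin(nt/2)/sin(t/2))^(2l), with its continuous value n^(2l) where sin(t/2) = 0.\<close>
definition jratio :: "nat \<Rightarrow> nat \<Rightarrow> real \<Rightarrow> real" where
  "jratio l n t = (if sin (t / 2) = 0 then real n ^ (2 * l)
                   else (sin (real n * t / 2) / sin (t / 2)) ^ (2 * l))"

definition gamma_ln :: "nat \<Rightarrow> nat \<Rightarrow> real" where
  "gamma_ln l n = integral {-pi..pi} (jratio l n)"

definition J_ln :: "nat \<Rightarrow> nat \<Rightarrow> real \<Rightarrow> real" where
  "J_ln l n t = jratio l n t / gamma_ln l n"

definition d_ln :: "nat \<Rightarrow> nat \<Rightarrow> real \<Rightarrow> nat \<Rightarrow> (nat \<Rightarrow> real) \<Rightarrow> real" where
  "d_ln l n xs s y = integral {xs - pi..xs + pi} (\<lambda>t. J_ln l n (t - xs) * (Pi_Y s y t / Pi_Y s y xs))"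

definition T_ln :: "nat \<Rightarrow> nat \<Rightarrow> real \<Rightarrow> nat \<Rightarrow> (nat \<Rightarrow> real) \<Rightarrow> real \<Rightarrow> real" where
  "T_ln l n xs s y x = oint (xs - pi) x (\<lambda>t. J_ln l n (t - xs) * (Pi_Y s y t / Pi_Y s y xs))
                         / d_ln l n xs s y"

definition chi :: "real \<Rightarrow> real \<Rightarrow> real" where
  "chi x xs = (if x \<le> xs then 0 else 1)"

text \<open>delta_n(x;x*) = min{1, 1/(n|sin((x-x*)/2)|)}, with 1/0 read as +infinity.\<close>
definition delta_n :: "nat \<Rightarrow> real \<Rightarrow> real \<Rightarrow> real" where
  "delta_n n x xs = (if real n * \<bar>sin ((x - xs) / 2)\<bar> = 0 then 1
                     else min 1 (1 / (real n * \<bar>sin ((x - xs) / 2)\<bar>)))"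

definition trig_poly :: "nat \<Rightarrow> (real \<Rightarrow> real) \<Rightarrow> bool" where
  "trig_poly m f \<longleftrightarrow> (\<exists>a b :: nat \<Rightarrow> real. \<forall>x. f x = (\<Sum>k\<le>m. a k * cos (real k * x) + b k * sin (real k * x)))"

end

theory Submission
  imports Defs
begin

text \<open>
  \<open>T\<close> is the normalised primitive of \<open>J\<^sub>l\<^sub>,\<^sub>n(t - x*) \<Pi>(t)/\<Pi>(x*)\<close>, a trigonometric polynomial of
  order \<open>l(n-1) + s\<close> (the Jackson kernel is a power of a squared Dirichlet sum, \<open>\<Pi>\<close> a product
  of \<open>s\<close> factors of order one).  Hence \<open>T\<close> minus its linear mean-value part is a trigonometric
  polynomial, \<open>T(x + 2\<pi>) = T(x) + 1\<close>, and \<open>T'\<close> has the sign of \<open>\<Pi>(x*) \<Pi>(x)\<close>.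

  Since \<open>x*\<close> is \<open>2 s C\<^sub>1\<^sub>2 \<pi>/n\<close>-far from the nodes, every factor of \<open>\<Pi>(x* + t)/\<Pi>(x*)\<close> is
  \<open>cos (t/2) + O(n\<bar>t\<bar> / (s C\<^sub>1\<^sub>2))\<close>; integrated against the kernel, the moment bound \<open>C\<^sub>1\<^sub>2\<close> turns
  this into \<open>\<bar>d - 1\<bar> < 1/2\<close>.  Pointwise, \<open>J\<^sub>l\<^sub>,\<^sub>n \<le> const \<cdot> n \<delta>\<^sub>n\<^sup>2\<^sup>l\<close>, with the reverse inequality where
  \<open>sin\<^sup>2(n t/2) \<ge> 1/2\<close>, and the product ratio is at most \<open>(2/\<delta>\<^sub>n)\<^sup>2\<^sup>s\<close>; this gives the bounds on \<open>T'\<close>.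
  Integrating \<open>n \<delta>\<^sub>n\<^sup>2\<^sup>(\<^sup>l\<^sup>-\<^sup>s\<^sup>) \<le> const \<cdot> n / (1 + n\<bar>t\<bar>)\<^sup>2\<^sup>(\<^sup>l\<^sup>-\<^sup>s\<^sup>)\<close> over the two tails of
  \<open>[x* - \<pi>, x* + \<pi>]\<close> bounds \<open>\<chi> - T\<close>, and quasi-periodicity extends this to \<open>\<bar>x - x*\<bar> \<le> 2\<pi>\<close>.
\<close>

section \<open>Trigonometric polynomials\<close>

lemma trig_poly_add:
  "trig_poly m f \<Longrightarrow> trig_poly m g \<Longrightarrow> trig_poly m (\<lambda>x. f x + g x)"
proof -
  assume "trig_poly m f" "trig_poly m g"
  then obtain a b c d where f: "\<And>x. f x = (\<Sum>k\<le>m. a k * cos (real k * x) + b k * sin (real k * x))"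
    and g: "\<And>x. g x = (\<Sum>k\<le>m. c k * cos (real k * x) + d k * sin (real k * x))"
    unfolding trig_poly_def by blast
  show ?thesis unfolding trig_poly_def
    by (rule exI[of _ "\<lambda>k. a k + c k"], rule exI[of _ "\<lambda>k. b k + d k"])
       (simp add: f g sum.distrib[symmetric] algebra_simps)
qed

lemma trig_poly_cmult: "trig_poly m f \<Longrightarrow> trig_poly m (\<lambda>x. c * f x)"
proof -
  assume "trig_poly m f"
  then obtain a b where f: "\<And>x. f x = (\<Sum>k\<le>m. a k * cos (real k * x) + b k * sin (real k * x))"
    unfolding trig_poly_def by blast
  show ?thesis unfolding trig_poly_def
    by (rule exI[of _ "\<lambda>k. c * a k"], rule exI[of _ "\<lambda>k. c * b k"])
       (simp add: f sum_distrib_left algebra_simps)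
qed

lemma trig_poly_const: "trig_poly m (\<lambda>x. c)"
  unfolding trig_poly_def
  by (rule exI[of _ "\<lambda>k. if k = 0 then c else 0"], rule exI[of _ "\<lambda>k. 0"])
     (simp add: if_distrib[of "\<lambda>a. a * _"] cong: if_cong)

lemma trig_poly_cos: "k \<le> m \<Longrightarrow> trig_poly m (\<lambda>x. cos (real k * x))"
  unfolding trig_poly_def
  by (rule exI[of _ "\<lambda>j. if j = k then 1 else 0"], rule exI[of _ "\<lambda>k. 0"])
     (simp add: if_distrib[of "\<lambda>a. a * _"] cong: if_cong)

lemma trig_poly_sin: "k \<le> m \<Longrightarrow> trig_poly m (\<lambda>x. sin (real k * x))"
  unfolding trig_poly_def
  by (rule exI[of _ "\<lambda>k. 0"], rule exI[of _ "\<lambda>j. if j = k then 1 else 0"])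
     (simp add: if_distrib[of "\<lambda>a. a * _"] cong: if_cong)

lemma trig_poly_cos_of_int: "nat \<bar>k\<bar> \<le> m \<Longrightarrow> trig_poly m (\<lambda>x. cos (of_int k * x))"
proof (cases "k \<ge> 0")
  case True
  then have "of_int k = real (nat k)" by simp
  then show "nat \<bar>k\<bar> \<le> m \<Longrightarrow> ?thesis" using True trig_poly_cos[of "nat k" m] by simp
next
  case False
  then have "of_int k * x = - (real (nat (- k)) * x)" for x :: real by simp
  then show "nat \<bar>k\<bar> \<le> m \<Longrightarrow> ?thesis" using False trig_poly_cos[of "nat (- k)" m] by simp
qed

lemma trig_poly_sin_of_int: "nat \<bar>k\<bar> \<le> m \<Longrightarrow> trig_poly m (\<lambda>x. sin (of_int k * x))"
proof (cases "k \<ge> 0")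
  case True
  then have "of_int k = real (nat k)" by simp
  then show "nat \<bar>k\<bar> \<le> m \<Longrightarrow> ?thesis" using True trig_poly_sin[of "nat k" m] by simp
next
  case False
  then have "of_int k * x = - (real (nat (- k)) * x)" for x :: real by simp
  then show "nat \<bar>k\<bar> \<le> m \<Longrightarrow> ?thesis"
    using False trig_poly_cmult[OF trig_poly_sin[of "nat (- k)" m], of "-1"] by simp
qed

lemma trig_poly_sum:
  "finite S \<Longrightarrow> (\<And>i. i \<in> S \<Longrightarrow> trig_poly m (f i)) \<Longrightarrow> trig_poly m (\<lambda>x. \<Sum>i\<in>S. f i x)"
proof (induction S rule: finite_induct)
  case empty
  then show ?case using trig_poly_const[of m 0] by simp
next
  case (insert i S)
  then show ?case using trig_poly_add[of m "f i" "\<lambda>x. \<Sum>i\<in>S. f i x"] by simp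
qed

lemma trig_poly_mult_harmonics:
  assumes "i \<le> m" "j \<le> k"
  shows "trig_poly (m + k) (\<lambda>x. (a * cos (real i * x) + b * sin (real i * x))
                               * (c * cos (real j * x) + d * sin (real j * x)))"
proof -
  define p where "p = int i - int j"
  have p: "of_int p * x = real i * x - real j * x" "real (i + j) * x = real i * x + real j * x"
    for x :: real
    unfolding p_def by (simp_all add: algebra_simps)
  have "(a * cos (real i * x) + b * sin (real i * x)) * (c * cos (real j * x) + d * sin (real j * x))
      = (a * c + b * d) / 2 * cos (of_int p * x) + (a * c - b * d) / 2 * cos (real (i + j) * x)
        + (b * c - a * d) / 2 * sin (of_int p * x) + (a * d + b * c) / 2 * sin (real (i + j) * x)"
    for x
    unfolding p cos_diff cos_add sin_diff sin_add by (simp add: field_simps)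
  moreover have "nat \<bar>p\<bar> \<le> m + k" "i + j \<le> m + k" using assms unfolding p_def by auto
  ultimately show ?thesis
    by (simp only:) (intro trig_poly_add trig_poly_cmult trig_poly_cos_of_int trig_poly_sin_of_int
        trig_poly_cos trig_poly_sin)
qed

lemma trig_poly_mult:
  "trig_poly m f \<Longrightarrow> trig_poly k g \<Longrightarrow> trig_poly (m + k) (\<lambda>x. f x * g x)"
proof -
  assume "trig_poly m f" "trig_poly k g"
  then obtain a b c d where f: "\<And>x. f x = (\<Sum>i\<le>m. a i * cos (real i * x) + b i * sin (real i * x))"
    and g: "\<And>x. g x = (\<Sum>j\<le>k. c j * cos (real j * x) + d j * sin (real j * x))"
    unfolding trig_poly_def by blast
  have "f x * g x = (\<Sum>i\<le>m. \<Sum>j\<le>k. (a i * cos (real i * x) + b i * sin (real i * x))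
                                    * (c j * cos (real j * x) + d j * sin (real j * x)))" for x
    unfolding f g by (simp add: sum_product)
  then show ?thesis by (simp only:) (intro trig_poly_sum trig_poly_mult_harmonics; simp)
qed

lemma trig_poly_power: "trig_poly m f \<Longrightarrow> trig_poly (m * k) (\<lambda>x. f x ^ k)"
proof (induction k)
  case 0
  then show ?case using trig_poly_const[of 0 1] by simp
next
  case (Suc k)
  then show ?case using trig_poly_mult[of m f "m * k" "\<lambda>x. f x ^ k"] by (simp add: add.commute)
qed

lemma trig_poly_prod:
  "finite S \<Longrightarrow> (\<And>i. i \<in> S \<Longrightarrow> trig_poly 1 (f i)) \<Longrightarrow> trig_poly (card S) (\<lambda>x. \<Prod>i\<in>S. f i x)"
proof (induction S rule: finite_induct)
  case empty
  then show ?case using trig_poly_const[of 0 1] by simp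
next
  case (insert i S)
  then show ?case using trig_poly_mult[of 1 "f i" "card S" "\<lambda>x. \<Prod>i\<in>S. f i x"] by simp
qed

lemma trig_poly_shift: "trig_poly m f \<Longrightarrow> trig_poly m (\<lambda>x. f (x - c))"
proof -
  assume "trig_poly m f"
  then obtain a b where f: "\<And>x. f x = (\<Sum>k\<le>m. a k * cos (real k * x) + b k * sin (real k * x))"
    unfolding trig_poly_def by blast
  have "f (x - c) = (\<Sum>k\<le>m. (a k * cos (real k * c) - b k * sin (real k * c)) * cos (real k * x)
     + (a k * sin (real k * c) + b k * cos (real k * c)) * sin (real k * x))" for x
    unfolding f by (intro sum.cong refl) (simp add: right_diff_distrib cos_diff sin_diff algebra_simps)
  then show ?thesis unfolding trig_poly_def
    by (intro exI[of _ "\<lambda>k. a k * cos (real k * c) - b k * sin (real k * c)"]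
        exI[of _ "\<lambda>k. a k * sin (real k * c) + b k * cos (real k * c)"]) auto
qed

lemma has_integral_real_derivative:
  assumes "\<And>x. x \<in> {a..b} \<Longrightarrow> (G has_real_derivative g x) (at x)" "a \<le> b"
  shows "(g has_integral (G b - G a)) {a..b}"
proof (rule fundamental_theorem_of_calculus[OF assms(2)])
  fix x assume "x \<in> {a..b}"
  then show "(G has_vector_derivative g x) (at x within {a..b})"
    using assms(1) has_field_derivative_at_within has_real_derivative_iff_has_vector_derivative by blast
qed

lemma oint_real_derivative:
  assumes "\<And>x. (G has_real_derivative g x) (at x)"
  shows "oint a b g = G b - G a"
proof (cases "a \<le> b")
  case True
  then show ?thesis
    unfolding oint_def using has_integral_real_derivative[of a b G g] assms by (simp add: integral_unique)
next
  case False
  then have "integral {b..a} g = G a - G b"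
    using has_integral_real_derivative[of b a G g] assms by (simp add: integral_unique)
  then show ?thesis unfolding oint_def using False by simp
qed

lemma trig_poly_antiderivative:
  assumes "trig_poly M g"
  obtains G c where "\<And>x. (G has_real_derivative g x) (at x)"
    and "\<And>x. G (x + 2 * pi) = G x + 2 * pi * c" and "trig_poly M (\<lambda>x. G x - c * x)"
proof -
  obtain a b where g: "\<And>x. g x = (\<Sum>k\<le>M. a k * cos (real k * x) + b k * sin (real k * x))"
    using assms unfolding trig_poly_def by blast
  define G where "G x = a 0 * x + (\<Sum>k\<in>{1..M}. a k * sin (real k * x) / real k - b k * cos (real k * x) / real k)"
    for x
  have split: "(\<Sum>k\<le>M. f k) = f 0 + (\<Sum>k\<in>{1..M}. f k)" for f :: "nat \<Rightarrow> real"
  proof -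
    have "{..M} = insert 0 {1..M}" by auto
    then show ?thesis by simp
  qed
  have "(G has_real_derivative a 0 + (\<Sum>k\<in>{1..M}. a k * cos (real k * x) + b k * sin (real k * x))) (at x)"
    for x unfolding G_def
    by (rule derivative_eq_intros DERIV_sum | simp)+ (auto intro!: sum.cong)
  then have "(G has_real_derivative g x) (at x)" for x
    unfolding g split[of "\<lambda>k. a k * cos (real k * x) + b k * sin (real k * x)"] by simp
  moreover have "G (x + 2 * pi) = G x + 2 * pi * a 0" for x
  proof -
    have "real k * (x + 2 * pi) = real k * x + 2 * real k * pi" for k by (simp add: algebra_simps)
    then have "sin (real k * (x + 2 * pi)) = sin (real k * x)" "cos (real k * (x + 2 * pi)) = cos (real k * x)"
      for k by (simp_all add: sin_add cos_add)
    then show ?thesis unfolding G_def by (simp add: algebra_simps)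
  qed
  moreover have "trig_poly M (\<lambda>x. G x - a 0 * x)"
  proof -
    have "G x - a 0 * x = (\<Sum>k\<le>M. (if k = 0 then 0 else - b k / real k) * cos (real k * x)
                                  + (if k = 0 then 0 else a k / real k) * sin (real k * x))" for x
      unfolding G_def split[of "\<lambda>k. (if k = 0 then 0 else - b k / real k) * cos (real k * x)
                                  + (if k = 0 then 0 else a k / real k) * sin (real k * x)"]
      by (auto simp: algebra_simps sum_subtractf[symmetric] diff_divide_distrib intro!: sum.cong)
    then show ?thesis unfolding trig_poly_def
      by (intro exI[of _ "\<lambda>k. if k = 0 then 0 else - b k / real k"]
          exI[of _ "\<lambda>k. if k = 0 then 0 else a k / real k"]) auto
  qed
  ultimately show ?thesis using that by blast
qed

lemma trig_poly_oint:
  assumes "trig_poly M g"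
  shows "((\<lambda>x. oint a x g) has_real_derivative g x) (at x)"
    and "oint a (x + 2 * pi) g = oint a x g + oint a (a + 2 * pi) g"
    and "trig_poly M (\<lambda>x. oint a x g - oint a (a + 2 * pi) g / (2 * pi) * x)"
proof -
  obtain G c where G: "\<And>x. (G has_real_derivative g x) (at x)"
    and G_periodic: "\<And>x. G (x + 2 * pi) = G x + 2 * pi * c" and G_trig: "trig_poly M (\<lambda>x. G x - c * x)"
    using trig_poly_antiderivative[OF assms] by blast
  have F: "oint a x g = G x - G a" for x by (rule oint_real_derivative[OF G])
  show "((\<lambda>x. oint a x g) has_real_derivative g x) (at x)"
    unfolding F using DERIV_diff[OF G DERIV_const] by simp
  show "oint a (x + 2 * pi) g = oint a x g + oint a (a + 2 * pi) g"
    unfolding F G_periodic by simp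
  have "oint a x g - oint a (a + 2 * pi) g / (2 * pi) * x = (G x - c * x) + (- G a)" for x
    unfolding F G_periodic by simp
  then show "trig_poly M (\<lambda>x. oint a x g - oint a (a + 2 * pi) g / (2 * pi) * x)"
    by (simp only:) (intro trig_poly_add trig_poly_const G_trig)
qed

section \<open>The Jackson kernel\<close>

definition dirichlet_sum :: "nat \<Rightarrow> real \<Rightarrow> real" where
  "dirichlet_sum n t = (\<Sum>j<n. cos ((real n - 1 - 2 * real j) * t / 2))"

lemma sin_half_mult_dirichlet_sum: "sin (t / 2) * dirichlet_sum n t = sin (real n * t / 2)"
proof -
  define h where "h j = sin ((real n - 2 * real j) * t / 2)" for j
  have telescoping: "sin (t / 2) * cos ((real n - 1 - 2 * real j) * t / 2) = (h j - h (Suc j)) / 2" for j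
  proof -
    have "t / 2 + (real n - 1 - 2 * real j) * t / 2 = (real n - 2 * real j) * t / 2"
      "t / 2 - (real n - 1 - 2 * real j) * t / 2 = - ((real n - 2 * real (Suc j)) * t / 2)"
      by (simp_all add: field_simps)
    then show ?thesis unfolding sin_times_cos h_def by (simp only: sin_minus) simp
  qed
  have "sin (t / 2) * dirichlet_sum n t = (\<Sum>j<n. h j - h (Suc j)) / 2"
    unfolding dirichlet_sum_def sum_distrib_left telescoping by (simp add: sum_divide_distrib)
  also have "\<dots> = (h 0 - h n) / 2" by (simp only: sum_lessThan_telescope')
  also have "\<dots> = sin (real n * t / 2)" unfolding h_def by (simp add: field_simps)
  finally show ?thesis .
qed

lemma abs_dirichlet_sum_le: "\<bar>dirichlet_sum n t\<bar> \<le> real n"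
proof -
  have "\<bar>dirichlet_sum n t\<bar> \<le> (\<Sum>j<n. \<bar>cos ((real n - 1 - 2 * real j) * t / 2)\<bar>)"
    unfolding dirichlet_sum_def by (rule sum_abs)
  also have "\<dots> \<le> (\<Sum>j<n. 1)" by (intro sum_mono) simp
  finally show ?thesis by simp
qed

lemma dirichlet_sum_squared_if_sin_half_zero:
  assumes "sin (t / 2) = 0"
  shows "dirichlet_sum n t ^ 2 = real n ^ 2"
proof -
  obtain k :: int where k: "t / 2 = of_int k * pi" using assms sin_zero_iff_int2 by blast
  define c where "c = cos ((real n - 1) * (of_int k * pi))"
  have "cos ((real n - 1 - 2 * real j) * t / 2) = c" for j
  proof -
    have arg: "(real n - 1 - 2 * real j) * t / 2 = (real n - 1) * (of_int k * pi) - (2 * pi) * of_int (int j * k)"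
      using k by (simp add: field_simps)
    show ?thesis unfolding arg cos_diff c_def cos_int_2pin sin_int_2pin by simp
  qed
  then have "dirichlet_sum n t = real n * c" unfolding dirichlet_sum_def by simp
  moreover have "c ^ 2 = 1"
  proof -
    have "(real n - 1) * (of_int k * pi) = pi * of_int ((int n - 1) * k)" by simp
    then have "sin ((real n - 1) * (of_int k * pi)) = 0" by (simp only: sin_npi_int)
    then show ?thesis unfolding c_def using sin_cos_squared_add[of "(real n - 1) * (of_int k * pi)"] by simp
  qed
  ultimately show ?thesis by (simp add: power_mult_distrib)
qed

lemma jratio_eq_dirichlet_sum: "jratio l n t = (dirichlet_sum n t ^ 2) ^ l"
proof (cases "sin (t / 2) = 0")
  case True
  then show ?thesis
    unfolding jratio_def using dirichlet_sum_squared_if_sin_half_zero[OF True, of n] by (simp add: power_mult)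
next
  case False
  then have "dirichlet_sum n t = sin (real n * t / 2) / sin (t / 2)"
    using sin_half_mult_dirichlet_sum[of t n] by (simp add: field_simps)
  then show ?thesis unfolding jratio_def using False by (simp add: power_mult)
qed

lemma trig_poly_dirichlet_sum_squared:
  assumes "n \<ge> 1"
  shows "trig_poly (n - 1) (\<lambda>t. dirichlet_sum n t ^ 2)"
proof -
  have "dirichlet_sum n t ^ 2 = (\<Sum>j<n. \<Sum>k<n. (1/2) * cos (of_int (int k - int j) * t)
                                          + (1/2) * cos (of_int (int (n - 1) - int (j + k)) * t))" for t
    unfolding dirichlet_sum_def power2_eq_square sum_product
  proof (intro sum.cong refl)
    fix j k
    have "(real n - 1 - 2 * real j) * t / 2 - (real n - 1 - 2 * real k) * t / 2 = of_int (int k - int j) * t"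
      "(real n - 1 - 2 * real j) * t / 2 + (real n - 1 - 2 * real k) * t / 2
         = of_int (int (n - 1) - int (j + k)) * t"
      using assms by (simp_all add: field_simps of_nat_diff)
    then show "cos ((real n - 1 - 2 * real j) * t / 2) * cos ((real n - 1 - 2 * real k) * t / 2)
      = (1/2) * cos (of_int (int k - int j) * t) + (1/2) * cos (of_int (int (n - 1) - int (j + k)) * t)"
      unfolding cos_times_cos by simp
  qed
  then show ?thesis
    by (simp only:) (intro trig_poly_sum trig_poly_add trig_poly_cmult trig_poly_cos_of_int; auto)
qed

lemma trig_poly_jratio: "n \<ge> 1 \<Longrightarrow> trig_poly ((n - 1) * l) (jratio l n)"
  unfolding jratio_eq_dirichlet_sum by (rule trig_poly_power[OF trig_poly_dirichlet_sum_squared])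

lemma continuous_on_jratio: "continuous_on S (jratio l n)"
  unfolding jratio_eq_dirichlet_sum dirichlet_sum_def by (auto intro!: continuous_intros)

lemma prod_atLeastAtMost_double:
  fixes s :: nat
  shows "(\<Prod>i\<in>{1 .. 2 * s}. f i) = (\<Prod>k\<in>{1..s}. f (2 * k - 1) * f (2 * k) :: real)"
proof (induction s)
  case 0
  then show ?case by simp
next
  case (Suc s)
  have "{1 .. 2 * Suc s} = insert (2 * s + 2) (insert (2 * s + 1) {1 .. 2 * s})"
    "{1 .. Suc s} = insert (Suc s) {1..s}" by auto
  then show ?case using Suc by (simp add: algebra_simps)
qed

lemma trig_poly_sin_half_mult_sin_half: "trig_poly 1 (\<lambda>x. sin ((x - a) / 2) * sin ((x - b) / 2))"
proof -
  have diff: "(x - a) / 2 - (x - b) / 2 = (b - a) / 2"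
    and sum: "(x - a) / 2 + (x - b) / 2 = real 1 * (x - (a + b) / 2)" for x :: real
    by (simp_all add: field_simps)
  have "sin ((x - a) / 2) * sin ((x - b) / 2) = (1/2) * cos ((b - a) / 2) + (-1/2) * cos (real 1 * (x - (a + b) / 2))"
    for x unfolding sin_times_sin diff sum by simp
  then show ?thesis
    by (simp only:) (intro trig_poly_add trig_poly_cmult trig_poly_const
        trig_poly_shift[of 1 "\<lambda>x. cos (real 1 * x)"] trig_poly_cos order.refl)
qed

lemma trig_poly_Pi_Y: "trig_poly s (Pi_Y s y)"
proof -
  have "Pi_Y s y = (\<lambda>x. \<Prod>k\<in>{1..s}. sin ((x - y (2 * k - 1)) / 2) * sin ((x - y (2 * k)) / 2))"
    unfolding Pi_Y_def by (intro ext prod_atLeastAtMost_double)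
  then show ?thesis
    using trig_poly_prod[of "{1..s}" "\<lambda>k x. sin ((x - y (2 * k - 1)) / 2) * sin ((x - y (2 * k)) / 2)"]
      trig_poly_sin_half_mult_sin_half by simp
qed

lemma trig_poly_J_ln_mult_Pi_Y:
  assumes "n \<ge> 1"
  shows "trig_poly (l * (n - 1) + s) (\<lambda>t. J_ln l n (t - xs) * (Pi_Y s y t / Pi_Y s y xs))"
proof -
  have "trig_poly ((n - 1) * l + s) (\<lambda>t. (1 / gamma_ln l n * jratio l n (t - xs)) * (1 / Pi_Y s y xs * Pi_Y s y t))"
    by (intro trig_poly_mult trig_poly_cmult trig_poly_shift[of _ "jratio l n"] trig_poly_jratio
        trig_poly_Pi_Y assms)
  then show ?thesis unfolding J_ln_def by (simp add: mult.commute)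
qed

lemma x_cos_le_sin: "0 \<le> x \<Longrightarrow> x \<le> pi \<Longrightarrow> x * cos x \<le> sin x"
proof -
  assume x: "0 \<le> x" "x \<le> pi"
  have "(\<lambda>u. sin u - u * cos u) 0 \<le> (\<lambda>u. sin u - u * cos u) x"
  proof (rule deriv_nonneg_imp_mono[where g = "\<lambda>u. sin u - u * cos u" and g' = "\<lambda>u. u * sin u"])
    fix u assume "u \<in> {0..x}"
    show "((\<lambda>u. sin u - u * cos u) has_real_derivative u * sin u) (at u)"
      by (auto intro!: derivative_eq_intros)
    show "0 \<le> u * sin u" using \<open>u \<in> {0..x}\<close> x by (auto intro!: mult_nonneg_nonneg sin_ge_zero)
  qed (use x in simp)
  then show ?thesis by simp
qed

lemma jordan_inequality: "0 \<le> x \<Longrightarrow> x \<le> pi / 2 \<Longrightarrow> 2 * x / pi \<le> sin x"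
proof (cases "x = 0")
  case False
  assume x: "0 \<le> x" "x \<le> pi / 2"
  then have "0 < x" using False by simp
  \<comment> \<open>\<open>sin u / u\<close> is decreasing on \<open>]0, pi/2]\<close>\<close>
  have "(\<lambda>u. - (sin u / u)) x \<le> (\<lambda>u. - (sin u / u)) (pi / 2)"
  proof (rule deriv_nonneg_imp_mono[where g = "\<lambda>u. - (sin u / u)" and g' = "\<lambda>u. (sin u - u * cos u) / u^2"])
    fix u assume u: "u \<in> {x..pi / 2}"
    with \<open>0 < x\<close> have "u > 0" by simp
    then show "((\<lambda>u. - (sin u / u)) has_real_derivative (sin u - u * cos u) / u^2) (at u)"
      by (auto intro!: derivative_eq_intros simp: field_simps power2_eq_square)
    show "0 \<le> (sin u - u * cos u) / u^2" using x_cos_le_sin[of u] u \<open>u > 0\<close> by simp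
  qed (use x in simp)
  then show ?thesis using \<open>0 < x\<close> by (simp add: field_simps)
qed simp

lemma abs_jordan_inequality: "\<bar>x\<bar> \<le> pi / 2 \<Longrightarrow> 2 * \<bar>x\<bar> / pi \<le> \<bar>sin x\<bar>"
  using jordan_inequality[of x] jordan_inequality[of "- x"] by (cases "x \<ge> 0") (simp_all add: sin_ge_zero)

lemma abs_sin_half_ge: "\<bar>x\<bar> \<le> pi \<Longrightarrow> \<bar>x\<bar> / pi \<le> \<bar>sin (x / 2)\<bar>"
  using abs_jordan_inequality[of "x / 2"] by simp

lemma abs_sin_half_minus_2pi_int: "\<bar>sin ((x - 2 * pi * of_int k) / 2)\<bar> = \<bar>sin (x / 2)\<bar>"
proof -
  have arg: "(x - 2 * pi * of_int k) / 2 = x / 2 - pi * of_int k" by (simp add: field_simps)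
  have "sin (pi * of_int k) = 0" by (rule sin_npi_int)
  moreover from this have "\<bar>cos (pi * of_int k)\<bar> = 1"
    using sin_cos_squared_add[of "pi * of_int k"] by (simp add: abs_square_eq_1)
  ultimately show ?thesis unfolding arg sin_diff by (simp add: abs_mult)
qed

lemma abs_diff_2pi_int_le: "\<exists>k::int. \<bar>x - 2 * pi * of_int k\<bar> \<le> pi"
proof
  define k where "k = \<lfloor>x / (2 * pi) + 1/2\<rfloor>"
  have "of_int k \<le> x / (2 * pi) + 1/2" "x / (2 * pi) + 1/2 < of_int k + 1"
    unfolding k_def by linarith+
  then show "\<bar>x - 2 * pi * of_int k\<bar> \<le> pi" using pi_gt_zero by (simp add: field_simps abs_le_iff)
qed

lemma abs_sin_half_ge_of_dist_2pi_int:
  assumes "0 \<le> D" "\<And>k::int. D \<le> \<bar>x - 2 * pi * of_int k\<bar>"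
  shows "D / pi \<le> \<bar>sin (x / 2)\<bar>"
proof -
  obtain k :: int where k: "\<bar>x - 2 * pi * of_int k\<bar> \<le> pi" using abs_diff_2pi_int_le by blast
  then have "\<bar>x - 2 * pi * of_int k\<bar> / pi \<le> \<bar>sin ((x - 2 * pi * of_int k) / 2)\<bar>"
    by (rule abs_sin_half_ge)
  moreover have "D / pi \<le> \<bar>x - 2 * pi * of_int k\<bar> / pi"
    using assms(2)[of k] by (simp add: divide_right_mono)
  ultimately show ?thesis using abs_sin_half_minus_2pi_int by simp
qed

lemma sin_half_squared_ge_half:
  assumes "2 * pi * of_int k + pi / 2 \<le> x" "x \<le> 2 * pi * of_int k + 3 * pi / 2"
  shows "sin (x / 2) ^ 2 \<ge> 1/2"
proof -
  have "cos x = cos (x - 2 * pi * of_int k)"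
    using cos_int_2pin[of k] sin_int_2pin[of k] by (simp add: cos_diff mult.commute)
  also have "\<dots> = - sin (x - 2 * pi * of_int k - pi / 2)" by (simp add: cos_sin_eq sin_minus[symmetric])
  also have "\<dots> \<le> 0" using assms by (simp add: sin_ge_zero)
  finally show ?thesis using cos_double_sin[of "x / 2"] by simp
qed

lemma delta_n_pos: "0 < delta_n n x xs" and delta_n_le_1: "delta_n n x xs \<le> 1"
  unfolding delta_n_def by auto

lemma delta_n_eq:
  "delta_n n x xs = (if real n * \<bar>sin ((x - xs) / 2)\<bar> \<le> 1 then 1 else 1 / (real n * \<bar>sin ((x - xs) / 2)\<bar>))"
  unfolding delta_n_def by (auto simp: min_def)

lemma delta_n_shift: "delta_n n x xs = delta_n n (x - xs) 0"
  unfolding delta_n_def by simp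

lemma delta_n_le_inverse:
  "real n * \<bar>sin ((x - xs) / 2)\<bar> \<noteq> 0 \<Longrightarrow> delta_n n x xs \<le> 1 / (real n * \<bar>sin ((x - xs) / 2)\<bar>)"
  unfolding delta_n_def by auto

lemma one_add_le_two_div_delta_n: "1 + real n * \<bar>sin ((x - xs) / 2)\<bar> \<le> 2 / delta_n n x xs"
  unfolding delta_n_eq by auto

lemma delta_n_ge: "1 / (1 + real n * \<bar>x - xs\<bar>) \<le> delta_n n x xs"
proof -
  have "real n * \<bar>sin ((x - xs) / 2)\<bar> \<le> real n * \<bar>x - xs\<bar>"
    using abs_sin_x_le_abs_x[of "(x - xs) / 2"] by (intro mult_left_mono) auto
  moreover have "0 < 1 + real n * \<bar>x - xs\<bar>" by (simp add: add_pos_nonneg)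
  ultimately show ?thesis unfolding delta_n_eq by (auto simp: divide_le_eq intro: divide_left_mono)
qed

lemma delta_n_le:
  assumes "\<bar>x - xs\<bar> \<le> pi"
  shows "delta_n n x xs \<le> 2 * pi / (1 + real n * \<bar>x - xs\<bar>)"
proof (cases "1 + real n * \<bar>x - xs\<bar> \<le> 2 * pi")
  case True
  then have "1 \<le> 2 * pi / (1 + real n * \<bar>x - xs\<bar>)" by (simp add: le_divide_eq add_pos_nonneg)
  then show ?thesis using delta_n_le_1[of n x xs] by linarith
next
  case False
  then have nu: "real n * \<bar>x - xs\<bar> > 1" using pi_gt3 by linarith
  have lower: "real n * \<bar>x - xs\<bar> / pi \<le> real n * \<bar>sin ((x - xs) / 2)\<bar>"
    using mult_left_mono[OF abs_sin_half_ge[OF assms], of "real n"] by simp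
  moreover have pos: "0 < real n * \<bar>x - xs\<bar> / pi" using nu by simp
  ultimately have sin_pos: "0 < real n * \<bar>sin ((x - xs) / 2)\<bar>" by linarith
  then have "delta_n n x xs \<le> 1 / (real n * \<bar>sin ((x - xs) / 2)\<bar>)"
    by (intro delta_n_le_inverse) (auto simp: zero_less_mult_iff)
  also have "\<dots> \<le> 1 / (real n * \<bar>x - xs\<bar> / pi)"
    using mult_pos_pos[OF sin_pos pos] by (intro divide_left_mono[OF lower]) auto
  also have "\<dots> \<le> 2 * pi / (1 + real n * \<bar>x - xs\<bar>)" using nu by (simp add: field_simps)
  finally show ?thesis .
qed

lemma delta_n_add_2pi: "delta_n n (x + 2 * pi) xs = delta_n n x xs"
  and delta_n_diff_2pi: "delta_n n (x - 2 * pi) xs = delta_n n x xs"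
proof -
  have "\<bar>sin ((x + 2 * pi - xs) / 2)\<bar> = \<bar>sin ((x - xs) / 2)\<bar>"
    using abs_sin_half_minus_2pi_int[of "x + 2 * pi - xs" 1] by simp
  moreover have "\<bar>sin ((x - 2 * pi - xs) / 2)\<bar> = \<bar>sin ((x - xs) / 2)\<bar>"
    using abs_sin_half_minus_2pi_int[of "x - xs" 1] by (simp add: algebra_simps)
  ultimately show "delta_n n (x + 2 * pi) xs = delta_n n x xs" "delta_n n (x - 2 * pi) xs = delta_n n x xs"
    unfolding delta_n_def by simp_all
qed

lemma jratio_nonneg: "0 \<le> jratio l n u"
  unfolding jratio_def by (simp add: power_mult)

lemma jratio_le: "jratio l n u \<le> real n ^ (2 * l) * delta_n n u 0 ^ (2 * l)"
proof (cases "real n * \<bar>sin (u / 2)\<bar> \<le> 1")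
  case True
  have "dirichlet_sum n u ^ 2 \<le> real n ^ 2"
    using power_mono[OF abs_dirichlet_sum_le[of n u], of 2] by simp
  then have "(dirichlet_sum n u ^ 2) ^ l \<le> (real n ^ 2) ^ l" by (rule power_mono) auto
  with True show ?thesis unfolding jratio_eq_dirichlet_sum delta_n_eq by (simp add: power_mult)
next
  case False
  then have s0: "sin (u / 2) \<noteq> 0" by auto
  have "jratio l n u = \<bar>sin (real n * u / 2) / sin (u / 2)\<bar> ^ (2 * l)"
    unfolding jratio_def using s0 by (simp only: if_False power_mult power2_abs)
  also have "\<dots> \<le> (1 / \<bar>sin (u / 2)\<bar>) ^ (2 * l)"
    by (intro power_mono) (auto simp: abs_divide divide_right_mono)
  also have "\<dots> = real n ^ (2 * l) * delta_n n u 0 ^ (2 * l)"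
    unfolding delta_n_eq using False s0 by (cases "n = 0") (simp_all add: power_divide power_mult_distrib)
  finally show ?thesis .
qed

lemma jratio_ge_near_zero:
  assumes "n \<ge> 1" "\<bar>u\<bar> \<le> pi / real n"
  shows "(2 * real n / pi) ^ (2 * l) \<le> jratio l n u"
proof (cases "sin (u / 2) = 0")
  case True
  have "2 * real n / pi \<le> real n" using pi_gt3 assms(1) by (simp add: field_simps)
  then have "(2 * real n / pi) ^ (2 * l) \<le> real n ^ (2 * l)" by (rule power_mono) simp
  then show ?thesis unfolding jratio_def using True by simp
next
  case False
  have "2 * real n / pi * \<bar>sin (u / 2)\<bar> \<le> 2 * real n / pi * \<bar>u / 2\<bar>"
    by (intro mult_left_mono abs_sin_x_le_abs_x) simp
  also have "\<dots> = 2 * \<bar>real n * u / 2\<bar> / pi" by (simp add: abs_mult)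
  also have "\<dots> \<le> \<bar>sin (real n * u / 2)\<bar>"
    using assms by (intro abs_jordan_inequality) (simp add: abs_mult field_simps)
  finally have "2 * real n / pi \<le> \<bar>sin (real n * u / 2)\<bar> / \<bar>sin (u / 2)\<bar>"
    using False by (simp add: le_divide_eq)
  then have "(2 * real n / pi) ^ (2 * l) \<le> (\<bar>sin (real n * u / 2)\<bar> / \<bar>sin (u / 2)\<bar>) ^ (2 * l)"
    by (rule power_mono) simp
  also have "\<dots> = jratio l n u" unfolding jratio_def using False by (simp add: power_mult power_divide)
  finally show ?thesis .
qed

lemma jratio_ge:
  assumes "sin (real n * u / 2) ^ 2 \<ge> 1/2"
  shows "(real n ^ 2 / 2) ^ l * delta_n n u 0 ^ (2 * l) \<le> jratio l n u"
proof -
  have s0: "sin (u / 2) \<noteq> 0"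
    using sin_half_mult_dirichlet_sum[of u n] assms by auto
  have "real n ^ 2 * delta_n n u 0 ^ 2 \<le> 1 / sin (u / 2) ^ 2"
  proof (cases "n = 0")
    case False
    then have "delta_n n u 0 \<le> 1 / (real n * \<bar>sin (u / 2)\<bar>)"
      using delta_n_le_inverse[of n u 0] s0 by simp
    then have "delta_n n u 0 ^ 2 \<le> (1 / (real n * \<bar>sin (u / 2)\<bar>)) ^ 2"
      by (simp add: power_mono delta_n_pos less_imp_le)
    then have "real n ^ 2 * delta_n n u 0 ^ 2 \<le> real n ^ 2 * (1 / (real n * \<bar>sin (u / 2)\<bar>)) ^ 2"
      by (rule mult_left_mono) simp
    then show ?thesis using False by (simp add: power_divide power_mult_distrib)
  qed simp
  then have "(real n ^ 2 / 2) ^ l * delta_n n u 0 ^ (2 * l) \<le> ((1 / sin (u / 2) ^ 2) / 2) ^ l"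
    unfolding power_mult power_mult_distrib[symmetric]
    by (intro power_mono) (auto simp: field_simps)
  also have "\<dots> \<le> (sin (real n * u / 2) ^ 2 / sin (u / 2) ^ 2) ^ l"
    using assms s0 by (intro power_mono) (auto simp: field_simps)
  also have "\<dots> = jratio l n u" unfolding jratio_def using s0 by (simp add: power_mult power_divide)
  finally show ?thesis .
qed

lemma jratio_has_integral: "(jratio l n has_integral gamma_ln l n) {-pi..pi}"
  unfolding gamma_ln_def by (intro integrable_integral integrable_continuous_interval continuous_on_jratio)

lemma gamma_ln_ge:
  assumes "n \<ge> 1"
  shows "(2 * pi / real n) * (2 * real n / pi) ^ (2 * l) \<le> gamma_ln l n"
proof -
  have integrable: "jratio l n integrable_on {a..b}" for a b
    by (intro integrable_continuous_interval continuous_on_jratio)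
  have "(2 * pi / real n) * (2 * real n / pi) ^ (2 * l)
      = integral {- (pi / real n)..pi / real n} (\<lambda>_. (2 * real n / pi) ^ (2 * l))"
    by simp
  also have "\<dots> \<le> integral {- (pi / real n)..pi / real n} (jratio l n)"
    using assms by (intro integral_le integrable jratio_ge_near_zero) auto
  also have "\<dots> \<le> integral {-pi..pi} (jratio l n)"
    using assms by (intro integral_subset_le integrable) (auto simp: jratio_nonneg divide_le_eq)
  finally show ?thesis unfolding gamma_ln_def .
qed

lemma gamma_ln_pos: "n \<ge> 1 \<Longrightarrow> 0 < gamma_ln l n"
proof -
  assume "n \<ge> 1"
  then have "0 < (2 * pi / real n) * (2 * real n / pi) ^ (2 * l)" by simp
  then show ?thesis using gamma_ln_ge[OF \<open>n \<ge> 1\<close>, of l] by linarith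
qed

lemma gamma_ln_le:
  assumes n: "n \<ge> 1" and l: "l \<ge> 1"
  shows "gamma_ln l n \<le> 4 * pi ^ 3 * real n ^ (2 * l) / real n"
proof -
  define K where "K = real n ^ (2 * l) * (4 * pi^2)"
  define H where "H x = K * arctan (real n * x) / real n" for x
  have "(H has_real_derivative K / (1 + (real n * x)^2)) (at x)" for x
  proof -
    have "((\<lambda>x. arctan (real n * x)) has_real_derivative inverse (1 + (real n * x)^2) * real n) (at x)"
      using DERIV_chain2[OF DERIV_arctan DERIV_cmult[OF DERIV_ident, of "real n"]] by simp
    then have "(H has_real_derivative K * (inverse (1 + (real n * x)^2) * real n) / real n) (at x)"
      unfolding H_def by (rule DERIV_cdivide[OF DERIV_cmult])
    moreover have "K * (inverse (1 + (real n * x)^2) * real n) / real n = K / (1 + (real n * x)^2)"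
      using n by (simp add: divide_inverse)
    ultimately show ?thesis by simp
  qed
  then have "((\<lambda>x. K / (1 + (real n * x)^2)) has_integral (H pi - H (-pi))) {-pi..pi}"
    by (intro has_integral_real_derivative) auto
  moreover have "jratio l n x \<le> K / (1 + (real n * x)^2)" if x: "x \<in> {-pi..pi}" for x
  proof -
    have decay: "(2 * pi / (1 + real n * \<bar>x\<bar>)) ^ 2 \<le> 4 * pi^2 / (1 + (real n * x)^2)"
    proof -
      have "1 + (real n * \<bar>x\<bar>)^2 \<le> (1 + real n * \<bar>x\<bar>)^2"
        by (simp add: power2_eq_square algebra_simps)
      moreover have "(real n * x)^2 = (real n * \<bar>x\<bar>)^2" by (simp add: power_mult_distrib)
      ultimately have "1 + (real n * x)^2 \<le> (1 + real n * \<bar>x\<bar>)^2" by simp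
      then have "4 * pi^2 / (1 + real n * \<bar>x\<bar>)^2 \<le> 4 * pi^2 / (1 + (real n * x)^2)"
        using add_pos_nonneg[of 1 "(real n * x)^2"] add_pos_nonneg[of 1 "real n * \<bar>x\<bar>"]
        by (intro divide_left_mono mult_pos_pos) auto
      then show ?thesis by (simp add: power_divide power_mult_distrib)
    qed
    have "jratio l n x \<le> real n ^ (2 * l) * delta_n n x 0 ^ (2 * l)" by (rule jratio_le)
    also have "\<dots> \<le> real n ^ (2 * l) * delta_n n x 0 ^ 2"
      using l delta_n_pos[of n x 0] delta_n_le_1[of n x 0]
      by (intro mult_left_mono power_decreasing) auto
    also have "\<dots> \<le> real n ^ (2 * l) * (2 * pi / (1 + real n * \<bar>x\<bar>)) ^ 2"
      using delta_n_le[of x 0 n] x delta_n_pos[of n x 0]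
      by (intro mult_left_mono power_mono) auto
    also have "\<dots> \<le> real n ^ (2 * l) * (4 * pi^2 / (1 + (real n * x)^2))"
      using decay by (rule mult_left_mono) simp
    finally show ?thesis unfolding K_def by simp
  qed
  ultimately have "gamma_ln l n \<le> H pi - H (-pi)" by (intro has_integral_le[OF jratio_has_integral])
  also have "\<dots> = 2 * K * arctan (real n * pi) / real n"
    unfolding H_def by (simp add: arctan_minus field_simps)
  also have "\<dots> \<le> 2 * K * (pi / 2) / real n"
    using arctan_ubound[of "real n * pi"] unfolding K_def by (intro divide_right_mono mult_left_mono) auto
  finally show ?thesis unfolding K_def by (simp add: field_simps power3_eq_cube power2_eq_square)
qed

lemma J_ln_nonneg: "n \<ge> 1 \<Longrightarrow> 0 \<le> J_ln l n u"
  unfolding J_ln_def using gamma_ln_pos jratio_nonneg by (simp add: divide_nonneg_pos)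

lemma continuous_on_J_ln: "continuous_on S (J_ln l n)"
  unfolding J_ln_def divide_inverse by (intro continuous_on_mult_right continuous_on_jratio)

lemma J_ln_has_integral: "n \<ge> 1 \<Longrightarrow> (J_ln l n has_integral 1) {-pi..pi}"
  using has_integral_mult_left[OF jratio_has_integral[of l n], where c = "inverse (gamma_ln l n)"]
    gamma_ln_pos[of n l]
  unfolding J_ln_def divide_inverse by simp

lemma J_ln_le:
  assumes "n \<ge> 1"
  shows "J_ln l n u \<le> (pi / 2) ^ (2 * l) / (2 * pi) * real n * delta_n n u 0 ^ (2 * l)"
proof -
  have "J_ln l n u \<le> real n ^ (2 * l) * delta_n n u 0 ^ (2 * l) / gamma_ln l n"
    unfolding J_ln_def using jratio_le less_imp_le[OF gamma_ln_pos[OF assms, of l]]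
    by (rule divide_right_mono)
  also have "\<dots> \<le> real n ^ (2 * l) * delta_n n u 0 ^ (2 * l) / ((2 * pi / real n) * (2 * real n / pi) ^ (2 * l))"
    using assms gamma_ln_ge[OF assms, of l] gamma_ln_pos[OF assms, of l]
    by (intro divide_left_mono mult_pos_pos) auto
  also have "\<dots> = (pi / 2) ^ (2 * l) / (2 * pi) * real n * delta_n n u 0 ^ (2 * l)"
    using assms by (simp add: field_simps power_mult_distrib power_divide)
  finally show ?thesis .
qed

lemma J_ln_ge:
  assumes "n \<ge> 1" "l \<ge> 1" "sin (real n * u / 2) ^ 2 \<ge> 1/2"
  shows "real n * delta_n n u 0 ^ (2 * l) / (2 ^ l * (4 * pi ^ 3)) \<le> J_ln l n u"
proof -
  have "(real n ^ 2 / 2) ^ l = real n ^ (2 * l) / 2 ^ l" by (simp add: power_divide power_mult)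
  then have "real n * delta_n n u 0 ^ (2 * l) / (2 ^ l * (4 * pi ^ 3))
      = (real n ^ 2 / 2) ^ l * delta_n n u 0 ^ (2 * l) / (4 * pi ^ 3 * real n ^ (2 * l) / real n)"
    using assms(1) by (simp add: field_simps)
  also have "\<dots> \<le> (real n ^ 2 / 2) ^ l * delta_n n u 0 ^ (2 * l) / gamma_ln l n"
    using assms gamma_ln_le[OF assms(1,2)] gamma_ln_pos[OF assms(1), of l]
    by (intro divide_left_mono mult_pos_pos) auto
  also have "\<dots> \<le> J_ln l n u"
    unfolding J_ln_def using jratio_ge[OF assms(3)] less_imp_le[OF gamma_ln_pos[OF assms(1), of l]]
    by (rule divide_right_mono)
  finally show ?thesis .
qed

section \<open>The product \<open>\<Pi>\<close> near \<open>x*\<close>\<close>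

lemma abs_prod_diff_le:
  fixes f g :: "'a \<Rightarrow> real"
  assumes "finite S" "\<And>i. i \<in> S \<Longrightarrow> \<bar>g i\<bar> \<le> 1" "\<And>i. i \<in> S \<Longrightarrow> \<bar>f i - g i\<bar> \<le> a" "0 \<le> a"
  shows "\<bar>prod f S - prod g S\<bar> \<le> (1 + a) ^ card S - 1"
  using assms
proof (induction S rule: finite_induct)
  case (insert j S)
  then have IH: "\<bar>prod f S - prod g S\<bar> \<le> (1 + a) ^ card S - 1"
    and gj: "\<bar>g j\<bar> \<le> 1" and fgj: "\<bar>f j - g j\<bar> \<le> a" by auto
  have fj: "\<bar>f j\<bar> \<le> 1 + a" using gj fgj by linarith
  have g_prod: "\<bar>prod g S\<bar> \<le> 1" unfolding abs_prod using insert by (intro prod_le_1) auto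
  have "prod f (insert j S) - prod g (insert j S) = f j * (prod f S - prod g S) + (f j - g j) * prod g S"
    using insert by (simp add: algebra_simps)
  then have "\<bar>prod f (insert j S) - prod g (insert j S)\<bar>
      \<le> \<bar>f j\<bar> * \<bar>prod f S - prod g S\<bar> + \<bar>f j - g j\<bar> * \<bar>prod g S\<bar>"
    by (simp add: abs_mult[symmetric] abs_triangle_ineq)
  also have "\<dots> \<le> (1 + a) * ((1 + a) ^ card S - 1) + a * 1"
    by (intro add_mono mult_mono fj IH fgj g_prod) (use \<open>0 \<le> a\<close> in auto)
  also have "\<dots> = (1 + a) ^ card (insert j S) - 1" using insert by (simp add: algebra_simps)
  finally show ?case .
qed simp

text \<open>Only the first two terms of the binomial expansion are kept; the rest is of order \<open>e\<^sup>2\<close>.\<close>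
lemma power_one_add_div_sub_one_le:
  fixes e r :: real
  assumes "m \<ge> 1" "0 \<le> e" "e \<le> 1" "0 \<le> r"
  shows "(1 + e * r / real m) ^ m - 1 \<le> e * r + e^2 * (1 + r) ^ m"
proof -
  define x where "x = e * r / real m"
  have split: "{..m} = insert 0 (insert 1 {2..m})" using assms by auto
  have binomial: "(1 + z) ^ m = (\<Sum>k\<le>m. of_nat (m choose k) * z ^ k)" for z :: real
    using binomial_ring[of z 1 m] by (simp add: add.commute)
  have "(1 + x) ^ m = 1 + e * r + (\<Sum>k\<in>{2..m}. of_nat (m choose k) * x ^ k)"
    unfolding binomial split using assms by (simp add: x_def)
  moreover have "(\<Sum>k\<in>{2..m}. of_nat (m choose k) * x ^ k) \<le> (\<Sum>k\<in>{2..m}. e^2 * (of_nat (m choose k) * r ^ k))"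
  proof (rule sum_mono)
    fix k assume k: "k \<in> {2..m}"
    have "x ^ k = e ^ k * (r ^ k / real m ^ k)" unfolding x_def by (simp add: power_mult_distrib power_divide)
    also have "\<dots> \<le> e ^ 2 * (r ^ k / 1)"
      using k assms by (intro mult_mono power_decreasing divide_left_mono) (auto simp: one_le_power)
    finally have "x ^ k \<le> e^2 * r ^ k" by simp
    from mult_left_mono[OF this, of "of_nat (m choose k)"]
    show "of_nat (m choose k) * x ^ k \<le> e^2 * (of_nat (m choose k) * r ^ k)"
      by (simp add: algebra_simps)
  qed
  moreover have "(\<Sum>k\<in>{2..m}. of_nat (m choose k) * r ^ k) \<le> (\<Sum>k\<le>m. of_nat (m choose k) * r ^ k)"
    using assms by (intro sum_mono2) auto
  then have "(\<Sum>k\<in>{2..m}. e^2 * (of_nat (m choose k) * r ^ k)) \<le> e^2 * (1 + r) ^ m"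
    unfolding binomial sum_distrib_left[symmetric] by (simp add: mult_left_mono)
  ultimately show ?thesis unfolding x_def[symmetric] by linarith
qed

lemma abs_cos_half_power_sub_one_le: "\<bar>cos (t / 2) ^ (2 * s) - 1\<bar> \<le> real s * t^2 / 4"
proof -
  have "sin (t / 2)^2 \<le> t^2 / 4"
    using power_mono[OF abs_sin_x_le_abs_x[of "t / 2"], of 2] by (simp add: power_divide)
  moreover have s1: "sin (t / 2)^2 \<le> 1" by (simp add: abs_square_le_1)
  then have "1 - real s * sin (t / 2)^2 \<le> (1 - sin (t / 2)^2) ^ s"
    using Bernoulli_inequality[of "- (sin (t / 2)^2)" s] by simp
  moreover have "(1 - sin (t / 2)^2) ^ s \<le> 1"
    using s1 by (intro power_le_one) auto
  moreover have "cos (t / 2) ^ (2 * s) = (1 - sin (t / 2)^2) ^ s"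
    by (simp add: power_mult cos_squared_eq)
  ultimately show ?thesis using mult_left_mono[of "sin (t / 2)^2" "t^2 / 4" "real s"] by (simp add: abs_le_iff)
qed

lemma sin_add_half_div_sin:
  fixes a t :: real
  shows "sin a \<noteq> 0 \<Longrightarrow> sin (a + t / 2) / sin a = cos (t / 2) + cos a / sin a * sin (t / 2)"
  unfolding sin_add by (simp add: field_simps)

lemma abs_cos_div_sin_le:
  fixes a c :: real
  shows "0 < c \<Longrightarrow> c \<le> \<bar>sin a\<bar> \<Longrightarrow> \<bar>cos a / sin a\<bar> \<le> 1 / c"
proof -
  assume "0 < c" "c \<le> \<bar>sin a\<bar>"
  have "\<bar>cos a / sin a\<bar> = \<bar>cos a\<bar> / \<bar>sin a\<bar>" by (simp add: abs_divide)
  also have "\<dots> \<le> 1 / \<bar>sin a\<bar>" by (intro divide_right_mono) auto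
  also have "\<dots> \<le> 1 / c" using \<open>0 < c\<close> \<open>c \<le> \<bar>sin a\<bar>\<close> by (intro divide_left_mono) auto
  finally show ?thesis .
qed

lemma Pi_Y_ratio_eq_prod:
  assumes "\<And>i. i \<in> {1 .. 2 * s} \<Longrightarrow> sin ((xs - y i) / 2) \<noteq> 0"
  shows "Pi_Y s y (xs + t) / Pi_Y s y xs
       = (\<Prod>i\<in>{1 .. 2 * s}. sin ((xs - y i) / 2 + t / 2) / sin ((xs - y i) / 2))"
proof -
  have arg: "(xs + t - y i) / 2 = (xs - y i) / 2 + t / 2" for i by (simp add: field_simps)
  show ?thesis unfolding Pi_Y_def arg using assms by (simp add: prod_dividef)
qed

text \<open>Each factor of the ratio differs from \<open>cos (t/2)\<close> by at most \<open>\<bar>t\<bar> / (2 c)\<close>.\<close>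
lemma abs_Pi_Y_ratio_sub_one_le:
  assumes c: "0 < c" and sin_ge: "\<And>i. i \<in> {1 .. 2 * s} \<Longrightarrow> c \<le> \<bar>sin ((xs - y i) / 2)\<bar>"
  shows "\<bar>Pi_Y s y (xs + t) / Pi_Y s y xs - 1\<bar> \<le> ((1 + \<bar>t\<bar> / (2 * c)) ^ (2 * s) - 1) + real s * t^2 / 4"
proof -
  have nz: "\<And>i. i \<in> {1 .. 2 * s} \<Longrightarrow> sin ((xs - y i) / 2) \<noteq> 0" using sin_ge c by force
  then have ratio: "Pi_Y s y (xs + t) / Pi_Y s y xs
      = (\<Prod>i\<in>{1 .. 2 * s}. sin ((xs - y i) / 2 + t / 2) / sin ((xs - y i) / 2))"
    by (rule Pi_Y_ratio_eq_prod)
  have "\<bar>(\<Prod>i\<in>{1 .. 2 * s}. sin ((xs - y i) / 2 + t / 2) / sin ((xs - y i) / 2))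
         - (\<Prod>i\<in>{1 .. 2 * s}. cos (t / 2))\<bar>
      \<le> (1 + \<bar>t\<bar> / (2 * c)) ^ card {1 .. 2 * s} - 1"
  proof (rule abs_prod_diff_le)
    fix i assume i: "i \<in> {1 .. 2 * s}"
    have "\<bar>cos ((xs - y i) / 2) / sin ((xs - y i) / 2) * sin (t / 2)\<bar> \<le> (1 / c) * (\<bar>t\<bar> / 2)"
      unfolding abs_mult using abs_cos_div_sin_le[OF c sin_ge[OF i]] abs_sin_x_le_abs_x[of "t / 2"] c
      by (intro mult_mono) auto
    then show "\<bar>sin ((xs - y i) / 2 + t / 2) / sin ((xs - y i) / 2) - cos (t / 2)\<bar> \<le> \<bar>t\<bar> / (2 * c)"
      unfolding sin_add_half_div_sin[OF nz[OF i]] by simp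
  qed (use c in auto)
  then have "\<bar>(\<Prod>i\<in>{1 .. 2 * s}. sin ((xs - y i) / 2 + t / 2) / sin ((xs - y i) / 2))
      - cos (t / 2) ^ (2 * s)\<bar> \<le> (1 + \<bar>t\<bar> / (2 * c)) ^ (2 * s) - 1"
    by simp
  then show ?thesis unfolding ratio using abs_cos_half_power_sub_one_le[of t s] by linarith
qed

lemma abs_Pi_Y_ratio_le:
  assumes c: "0 < c" and sin_ge: "\<And>i. i \<in> {1 .. 2 * s} \<Longrightarrow> c \<le> \<bar>sin ((xs - y i) / 2)\<bar>"
  shows "\<bar>Pi_Y s y (xs + t) / Pi_Y s y xs\<bar> \<le> (1 + \<bar>sin (t / 2)\<bar> / c) ^ (2 * s)"
proof -
  have nz: "\<And>i. i \<in> {1 .. 2 * s} \<Longrightarrow> sin ((xs - y i) / 2) \<noteq> 0" using sin_ge c by force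
  then have ratio: "Pi_Y s y (xs + t) / Pi_Y s y xs
      = (\<Prod>i\<in>{1 .. 2 * s}. sin ((xs - y i) / 2 + t / 2) / sin ((xs - y i) / 2))"
    by (rule Pi_Y_ratio_eq_prod)
  have "(\<Prod>i\<in>{1 .. 2 * s}. \<bar>sin ((xs - y i) / 2 + t / 2) / sin ((xs - y i) / 2)\<bar>)
      \<le> (1 + \<bar>sin (t / 2)\<bar> / c) ^ card {1 .. 2 * s}"
  proof (rule prod_le_power)
    fix i assume i: "i \<in> {1 .. 2 * s}"
    have "\<bar>cos ((xs - y i) / 2) / sin ((xs - y i) / 2) * sin (t / 2)\<bar> \<le> 1 / c * \<bar>sin (t / 2)\<bar>"
      unfolding abs_mult using abs_cos_div_sin_le[OF c sin_ge[OF i]] by (rule mult_right_mono) simp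
    then have "\<bar>sin ((xs - y i) / 2 + t / 2) / sin ((xs - y i) / 2)\<bar> \<le> 1 + 1 / c * \<bar>sin (t / 2)\<bar>"
      unfolding sin_add_half_div_sin[OF nz[OF i]]
      using abs_cos_le_one[of "t / 2"]
        abs_triangle_ineq[of "cos (t / 2)" "cos ((xs - y i) / 2) / sin ((xs - y i) / 2) * sin (t / 2)"]
      by linarith
    then show "0 \<le> \<bar>sin ((xs - y i) / 2 + t / 2) / sin ((xs - y i) / 2)\<bar>
        \<and> \<bar>sin ((xs - y i) / 2 + t / 2) / sin ((xs - y i) / 2)\<bar> \<le> 1 + \<bar>sin (t / 2)\<bar> / c"
      by simp
  qed (use c in auto)
  then show ?thesis unfolding ratio abs_prod by simp
qed

lemma real_derivative_diff_mono:
  assumes "\<And>x. x \<in> {a..b} \<Longrightarrow> (G has_real_derivative g x) (at x)"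
    "\<And>x. x \<in> {a..b} \<Longrightarrow> (H has_real_derivative h x) (at x)"
    "\<And>x. x \<in> {a..b} \<Longrightarrow> g x \<le> h x" "a \<le> b"
  shows "G b - G a \<le> H b - H a"
proof -
  have "(\<lambda>x. H x - G x) a \<le> (\<lambda>x. H x - G x) b"
  proof (rule deriv_nonneg_imp_mono[where g = "\<lambda>x. H x - G x" and g' = "\<lambda>x. h x - g x" and a = a and b = b])
    fix x assume x: "x \<in> {a..b}"
    show "((\<lambda>x. H x - G x) has_real_derivative h x - g x) (at x)"
      using assms(1,2)[OF x] by (rule DERIV_diff[rotated])
    show "0 \<le> h x - g x" using assms(3)[OF x] by simp
  qed (use assms(4) in simp)
  then show ?thesis by simp
qed

lemma has_real_derivative_inverse_power:
  fixes q :: "real \<Rightarrow> real" and A c :: real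
  assumes q: "(q has_real_derivative c) (at t)" "q t \<noteq> 0"
  shows "((\<lambda>t. - A / real (k + 1) * inverse (q t ^ (k + 1))) has_real_derivative A * c / q t ^ (k + 2)) (at t)"
proof -
  have "((\<lambda>t. inverse (q t ^ (k + 1))) has_real_derivative
      - (of_nat (k + 1) * (c * q t ^ (k + 1 - Suc 0)) * inverse ((q t ^ (k + 1)) ^ Suc (Suc 0)))) (at t)"
    by (rule DERIV_inverse_fun[OF DERIV_power[OF q(1)]]) (use q(2) in simp)
  from DERIV_cmult[OF this, of "- A / real (k + 1)"]
  have "((\<lambda>t. - A / real (k + 1) * inverse (q t ^ (k + 1))) has_real_derivative
      A * c * (q t ^ k * inverse (q t ^ k * q t ^ (k + 2)))) (at t)"
    by (simp add: power_add[symmetric] power_mult[symmetric] mult_ac)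
  moreover have "q t ^ k * inverse (q t ^ k * q t ^ (k + 2)) = inverse (q t ^ (k + 2))"
    using q(2) by (simp add: nonzero_inverse_mult_distrib)
  ultimately show ?thesis by (simp only: divide_inverse)
qed

lemma abs_diff_le_of_deriv_decay_right:
  fixes G g :: "real \<Rightarrow> real"
  assumes G: "\<And>t. (G has_real_derivative g t) (at t)"
    and m: "m \<ge> 2" and A: "A \<ge> 0" and u: "0 \<le> u" "u \<le> pi"
    and decay: "\<And>t. t \<in> {xs + u..xs + pi} \<Longrightarrow> \<bar>g t\<bar> \<le> A * real n / (1 + real n * (t - xs)) ^ m"
  shows "\<bar>G (xs + pi) - G (xs + u)\<bar> \<le> A / (1 + real n * u) ^ (m - 1)"
proof -
  obtain k where k: "m = k + 2" using m by (metis add.commute le_Suc_ex)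
  define q where "q t = 1 + real n * (t - xs)" for t
  define H where "H t = - A / real (k + 1) * inverse (q t ^ (k + 1))" for t
  define h where "h t = A * real n / q t ^ m" for t
  have H: "(H has_real_derivative h t) (at t)" if t: "t \<in> {xs + u..xs + pi}" for t
  proof -
    have "(q has_real_derivative real n) (at t)" unfolding q_def by (auto intro!: derivative_eq_intros)
    moreover have "0 \<le> real n * (t - xs)" using t u by simp
    then have "q t \<noteq> 0" unfolding q_def by linarith
    ultimately show ?thesis unfolding H_def h_def k by (rule has_real_derivative_inverse_power)
  qed
  have "G (xs + pi) - G (xs + u) \<le> H (xs + pi) - H (xs + u)"
    using G decay u by (intro real_derivative_diff_mono[OF _ H]) (auto simp: h_def q_def abs_le_iff)
  moreover have "- G (xs + pi) - (- G (xs + u)) \<le> H (xs + pi) - H (xs + u)"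
    using decay u
    by (intro real_derivative_diff_mono[OF DERIV_minus[OF G] H]) (auto simp: h_def q_def abs_le_iff)
  moreover have "H (xs + pi) \<le> 0" unfolding H_def q_def using A by (simp add: add_nonneg_nonneg)
  moreover have "- H (xs + u) \<le> A / (1 + real n * u) ^ (m - 1)"
  proof -
    have "- H (xs + u) = (A / real (k + 1)) / (1 + real n * u) ^ (k + 1)"
      unfolding H_def q_def by (simp add: divide_inverse)
    also have "\<dots> \<le> A / (1 + real n * u) ^ (k + 1)"
      using A u by (intro divide_right_mono) (auto simp: divide_le_eq mult_le_cancel_left1)
    finally show ?thesis unfolding k by simp
  qed
  ultimately show ?thesis by (simp add: abs_le_iff)
qed

lemma abs_diff_le_of_deriv_decay_left:
  fixes G g :: "real \<Rightarrow> real"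
  assumes G: "\<And>t. (G has_real_derivative g t) (at t)"
    and m: "m \<ge> 2" and A: "A \<ge> 0" and u: "- pi \<le> u" "u \<le> 0"
    and decay: "\<And>t. t \<in> {xs - pi..xs + u} \<Longrightarrow> \<bar>g t\<bar> \<le> A * real n / (1 + real n * (xs - t)) ^ m"
  shows "\<bar>G (xs + u) - G (xs - pi)\<bar> \<le> A / (1 + real n * \<bar>u\<bar>) ^ (m - 1)"
proof -
  have G': "((\<lambda>t. - G (2 * xs - t)) has_real_derivative g (2 * xs - t)) (at t)" for t
  proof -
    have "((\<lambda>t. 2 * xs - t) has_real_derivative -1) (at t)" by (auto intro!: derivative_eq_intros)
    from DERIV_minus[OF DERIV_chain2[OF G this]] show ?thesis by simp
  qed
  have "\<bar>- G (2 * xs - (xs + pi)) - - G (2 * xs - (xs + - u))\<bar> \<le> A / (1 + real n * (- u)) ^ (m - 1)"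
  proof (rule abs_diff_le_of_deriv_decay_right[OF G' m A])
    fix t assume "t \<in> {xs + - u..xs + pi}"
    then show "\<bar>g (2 * xs - t)\<bar> \<le> A * real n / (1 + real n * (t - xs)) ^ m"
      using decay[of "2 * xs - t"] by simp
  qed (use u in auto)
  then show ?thesis using u by (simp add: abs_minus_commute)
qed

section \<open>The primitive \<open>T\<close>\<close>

text \<open>\<open>4\<^sup>s\<close> comes from the bound \<open>(2/\<delta>\<^sub>n)\<^sup>2\<^sup>s\<close> on \<open>\<Pi>(x)/\<Pi>(x*)\<close>, the rest from the lower bound
  on \<open>\<gamma>\<^sub>l\<^sub>,\<^sub>n\<close>.\<close>
definition jackson_const :: "nat \<Rightarrow> nat \<Rightarrow> real" where
  "jackson_const s l = 4 ^ s * (pi / 2) ^ (2 * l) / (2 * pi)"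

lemma jackson_const_pos: "0 < jackson_const s l"
  unfolding jackson_const_def by simp

lemma yext_add_mult:
  assumes "i \<in> {1 .. 2 * s}"
  shows "yext s y (int i + 2 * int s * k) = y i - 2 * pi * of_int k"
proof -
  have arg: "int i + 2 * int s * k - 1 = (int i - 1) + k * (2 * int s)" by (simp add: algebra_simps)
  have "0 \<le> int i - 1" "int i - 1 < 2 * int s" using assms by auto
  then have "(int i + 2 * int s * k - 1) mod (2 * int s) = int i - 1"
    and "(int i + 2 * int s * k - 1) div (2 * int s) = k"
    unfolding arg by simp_all
  then show ?thesis unfolding yext_def using assms by simp
qed

locale jackson_setting =
  fixes s l n :: nat and C12 xs :: real and y :: "nat \<Rightarrow> real"
  assumes one_le_s: "1 \<le> s" and s_less_l: "s < l" and one_le_n: "1 \<le> n" and C12_pos: "0 < C12"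
    and moment_bound: "\<And>\<nu>::nat. \<nu> \<le> 2 * l - 2 \<Longrightarrow>
      integral {-pi..pi} (\<lambda>t. (1 + real n * \<bar>t\<bar>) ^ \<nu> * J_ln l n t) \<le> C12"
    and nodes_far: "\<And>i::int. 2 * real s * C12 * pi / real n \<le> \<bar>xs - yext s y i\<bar>"
begin

abbreviation d where "d \<equiv> d_ln l n xs s y"
abbreviation T where "T \<equiv> T_ln l n xs s y"

lemma one_le_l: "1 \<le> l"
  using one_le_s s_less_l by simp

lemma node_dist_ge:
  assumes "i \<in> {1 .. 2 * s}"
  shows "2 * real s * C12 * pi / real n \<le> \<bar>xs - y i - 2 * pi * of_int k\<bar>"
  using nodes_far[of "int i + 2 * int s * (- k)"] unfolding yext_add_mult[OF assms] by simp

lemma two_s_C12_le_n: "2 * real s * C12 \<le> real n"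
proof -
  obtain k :: int where "\<bar>xs - y 1 - 2 * pi * of_int k\<bar> \<le> pi" using abs_diff_2pi_int_le by blast
  then have "2 * real s * C12 * pi / real n \<le> pi" using node_dist_ge[of 1 k] one_le_s by simp
  then show ?thesis using one_le_n by (simp add: field_simps)
qed

lemma abs_sin_half_node_ge:
  "i \<in> {1 .. 2 * s} \<Longrightarrow> 2 * real s * C12 / real n \<le> \<bar>sin ((xs - y i) / 2)\<bar>"
  using abs_sin_half_ge_of_dist_2pi_int[of "2 * real s * C12 * pi / real n" "xs - y i"]
    node_dist_ge C12_pos by simp

lemma separation_pos: "0 < 2 * real s * C12 / real n"
  using one_le_s one_le_n C12_pos by simp

lemma Pi_Y_xs_nonzero: "Pi_Y s y xs \<noteq> 0"
  unfolding Pi_Y_def using abs_sin_half_node_ge separation_pos by fastforce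

lemma one_le_C12: "1 \<le> C12"
proof -
  have "((\<lambda>t. (1 + real n * \<bar>t\<bar>) ^ 0 * J_ln l n t) has_integral 1) {-pi..pi}"
    using J_ln_has_integral[OF one_le_n] by simp
  then show ?thesis using moment_bound[of 0] by (simp add: integral_unique)
qed

definition integrand :: "real \<Rightarrow> real" where
  "integrand t = J_ln l n (t - xs) * (Pi_Y s y t / Pi_Y s y xs)"

definition F :: "real \<Rightarrow> real" where
  "F x = oint (xs - pi) x integrand"

lemma T_eq_F_div_d: "T x = F x / d"
  unfolding T_ln_def F_def integrand_def ..

lemma d_eq_F: "d = F (xs + pi)"
  unfolding d_ln_def F_def oint_def integrand_def by simp

lemma F_left_end: "F (xs - pi) = 0"
  unfolding F_def oint_def by simp

lemma trig_poly_integrand: "trig_poly (l * (n - 1) + s) integrand"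
  unfolding integrand_def[abs_def] by (rule trig_poly_J_ln_mult_Pi_Y[OF one_le_n])

lemma has_real_derivative_F: "(F has_real_derivative integrand x) (at x)"
  unfolding F_def[abs_def] by (rule trig_poly_oint(1)[OF trig_poly_integrand])

lemma F_add_2pi: "F (x + 2 * pi) = F x + d"
proof -
  have "xs - pi + 2 * pi = xs + pi" by simp
  from trig_poly_oint(2)[OF trig_poly_integrand, of "xs - pi" x, unfolded this]
  show ?thesis unfolding d_eq_F F_def .
qed

lemma trig_poly_F_sub_linear: "trig_poly (l * (n - 1) + s) (\<lambda>x. F x - d / (2 * pi) * x)"
proof -
  have "xs - pi + 2 * pi = xs + pi" by simp
  from trig_poly_oint(3)[OF trig_poly_integrand, of "xs - pi", unfolded this]
  show ?thesis unfolding d_eq_F F_def .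
qed

lemma J_ln_mult_Pi_Y_ratio_has_integral:
  "((\<lambda>t. J_ln l n t * (Pi_Y s y (xs + t) / Pi_Y s y xs)) has_integral d) {-pi..pi}"
proof -
  have "((\<lambda>t. F (xs + t)) has_real_derivative J_ln l n t * (Pi_Y s y (xs + t) / Pi_Y s y xs)) (at t)" for t
    using DERIV_chain2[OF has_real_derivative_F DERIV_add[OF DERIV_const DERIV_ident, of xs t]]
    unfolding integrand_def by simp
  then show ?thesis using has_integral_real_derivative[of "-pi" pi "\<lambda>t. F (xs + t)"]
    unfolding d_eq_F using F_left_end by simp
qed

text \<open>Expanding the product \<open>\<Pi>(x* + t) / \<Pi>(x*)\<close> around \<open>t = 0\<close>: its deviation from \<open>1\<close> is
  controlled by powers of \<open>1 + n\<bar>t\<bar>\<close>, whose integrals against \<open>J\<close> are the moments bounded by \<open>C12\<close>.\<close>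
lemma abs_Pi_Y_ratio_sub_one_le_moments:
  defines "e \<equiv> 1 / (2 * C12)" and "k \<equiv> real s / (4 * real n ^ 2)"
  shows "\<bar>Pi_Y s y (xs + t) / Pi_Y s y xs - 1\<bar>
    \<le> e * (real n * \<bar>t\<bar>) + e^2 * (1 + real n * \<bar>t\<bar>) ^ (2 * s) + k * (1 + real n * \<bar>t\<bar>)^2"
proof -
  define r where "r = real n * \<bar>t\<bar>"
  have r: "0 \<le> r" unfolding r_def by simp
  have e: "0 \<le> e" "e \<le> 1" unfolding e_def using one_le_C12 by (auto simp: field_simps)
  have "\<bar>t\<bar> / (2 * (2 * real s * C12 / real n)) = e * r / real (2 * s)"
    unfolding e_def r_def using one_le_s C12_pos one_le_n by (simp add: field_simps)
  moreover have "\<bar>Pi_Y s y (xs + t) / Pi_Y s y xs - 1\<bar>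
      \<le> ((1 + \<bar>t\<bar> / (2 * (2 * real s * C12 / real n))) ^ (2 * s) - 1) + real s * t^2 / 4"
    by (rule abs_Pi_Y_ratio_sub_one_le[OF separation_pos abs_sin_half_node_ge])
  ultimately have "\<bar>Pi_Y s y (xs + t) / Pi_Y s y xs - 1\<bar>
      \<le> ((1 + e * r / real (2 * s)) ^ (2 * s) - 1) + real s * t^2 / 4"
    by simp
  also have "(1 + e * r / real (2 * s)) ^ (2 * s) - 1 \<le> e * r + e^2 * (1 + r) ^ (2 * s)"
    using one_le_s e r by (intro power_one_add_div_sub_one_le) auto
  also have "real s * t^2 / 4 = k * r^2"
    unfolding k_def r_def using one_le_n by (simp add: field_simps power_mult_distrib)
  also have "\<dots> \<le> k * (1 + r)^2" unfolding k_def using r by (intro mult_left_mono power_mono) auto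
  finally show ?thesis unfolding r_def by simp
qed

lemma abs_d_sub_one_less: "\<bar>d - 1\<bar> < 1/2"
proof -
  define e where "e = 1 / (2 * C12)"
  define k where "k = real s / (4 * real n ^ 2)"
  define M where "M \<nu> t = (1 + real n * \<bar>t\<bar>) ^ \<nu> * J_ln l n t" for \<nu> t
  have M_integral: "(M \<nu> has_integral integral {-pi..pi} (M \<nu>)) {-pi..pi}" for \<nu>
    unfolding M_def by (intro integrable_integral integrable_continuous_interval continuous_intros
        continuous_on_J_ln)
  have M_le: "\<nu> \<le> 2 * l - 2 \<Longrightarrow> integral {-pi..pi} (M \<nu>) \<le> C12" for \<nu>
    unfolding M_def by (rule moment_bound)
  define B where "B t = e * (M 1 t - M 0 t) + e^2 * M (2 * s) t + k * M 2 t" for t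
  define b where "b = e * (integral {-pi..pi} (M 1) - 1) + e^2 * integral {-pi..pi} (M (2 * s))
                        + k * integral {-pi..pi} (M 2)"
  have "(M 0 has_integral 1) {-pi..pi}" unfolding M_def using J_ln_has_integral[OF one_le_n] by simp
  then have B_integral: "(B has_integral b) {-pi..pi}"
    unfolding B_def b_def by (intro has_integral_add has_integral_mult_right has_integral_diff M_integral)
  have d_integral:
    "((\<lambda>t. J_ln l n t * (Pi_Y s y (xs + t) / Pi_Y s y xs) - J_ln l n t) has_integral (d - 1)) {-pi..pi}"
    by (intro has_integral_diff J_ln_mult_Pi_Y_ratio_has_integral J_ln_has_integral one_le_n)
  have pointwise: "\<bar>J_ln l n t * (Pi_Y s y (xs + t) / Pi_Y s y xs) - J_ln l n t\<bar> \<le> B t" for t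
  proof -
    have "J_ln l n t * (Pi_Y s y (xs + t) / Pi_Y s y xs) - J_ln l n t
        = J_ln l n t * (Pi_Y s y (xs + t) / Pi_Y s y xs - 1)"
      by (simp add: right_diff_distrib)
    then have "\<bar>J_ln l n t * (Pi_Y s y (xs + t) / Pi_Y s y xs) - J_ln l n t\<bar>
        = J_ln l n t * \<bar>Pi_Y s y (xs + t) / Pi_Y s y xs - 1\<bar>"
      using J_ln_nonneg[OF one_le_n, of l t] by (simp only: abs_mult abs_of_nonneg)
    also have "\<dots> \<le> B t"
      using mult_left_mono[OF abs_Pi_Y_ratio_sub_one_le_moments J_ln_nonneg[OF one_le_n]]
      unfolding B_def M_def e_def k_def by (simp add: algebra_simps)
    finally show ?thesis .
  qed
  have "d - 1 \<le> b"
  proof (rule has_integral_le[OF d_integral B_integral])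
    fix t show "J_ln l n t * (Pi_Y s y (xs + t) / Pi_Y s y xs) - J_ln l n t \<le> B t"
      using pointwise[of t] by (simp only: abs_le_iff)
  qed
  moreover have "- b \<le> d - 1"
  proof (rule has_integral_le[OF has_integral_neg[OF B_integral] d_integral])
    fix t show "- B t \<le> J_ln l n t * (Pi_Y s y (xs + t) / Pi_Y s y xs) - J_ln l n t"
      using pointwise[of t] by (simp only: abs_le_iff) linarith
  qed
  ultimately have "\<bar>d - 1\<bar> \<le> b" by linarith
  also have "b \<le> e * (C12 - 1) + e^2 * C12 + k * C12"
    using M_le[of 1] M_le[of "2 * s"] M_le[of 2] s_less_l one_le_s one_le_C12
    unfolding b_def e_def k_def by (intro add_mono mult_left_mono) auto
  also have "\<dots> < 1/2"
  proof -
    have e_part: "e * (C12 - 1) + e^2 * C12 = 1/2 - 1 / (4 * C12)"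
      unfolding e_def using C12_pos by (simp add: field_simps power2_eq_square)
    have "real s * C12^2 < (2 * real s * C12)^2"
      using one_le_s C12_pos by (simp add: power_mult_distrib power2_eq_square)
    moreover have "(2 * real s * C12)^2 \<le> real n ^ 2"
      by (rule power_mono[OF two_s_C12_le_n]) (use C12_pos in simp)
    ultimately have "real s * C12^2 < real n ^ 2" by linarith
    then have "k * C12 < 1 / (4 * C12)"
      unfolding k_def using C12_pos one_le_n by (simp add: field_simps power2_eq_square)
    with e_part show ?thesis by linarith
  qed
  finally show ?thesis .
qed

lemma d_bounds: "1/2 < d" "d < 3/2"
  using abs_d_sub_one_less by linarith+

lemma T_sub_linear_trig_poly: "trig_poly (l * (n - 1) + s) (\<lambda>x. T x - x / (2 * pi))"
proof -
  have "T x - x / (2 * pi) = 1 / d * (F x - d / (2 * pi) * x)" for x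
    unfolding T_eq_F_div_d using d_bounds by (simp add: field_simps)
  then show ?thesis by (simp only:) (intro trig_poly_cmult trig_poly_F_sub_linear)
qed

lemma deriv_T: "deriv T x = integrand x / d"
  unfolding T_eq_F_div_d[abs_def] by (intro DERIV_imp_deriv DERIV_cdivide has_real_derivative_F)

lemma Pi_Y_mult_deriv_T_mult_Pi_Y_nonneg: "0 \<le> Pi_Y s y xs * deriv T x * Pi_Y s y x"
proof -
  have "Pi_Y s y xs * deriv T x * Pi_Y s y x = J_ln l n (x - xs) * (Pi_Y s y x)^2 / d"
    unfolding deriv_T integrand_def using Pi_Y_xs_nonzero by (simp add: field_simps power2_eq_square)
  then show ?thesis using J_ln_nonneg[OF one_le_n] d_bounds by simp
qed

lemma abs_Pi_Y_ratio_le_delta_n: "\<bar>Pi_Y s y x / Pi_Y s y xs\<bar> \<le> (2 / delta_n n x xs) ^ (2 * s)"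
proof -
  have "1 * 1 \<le> real s * C12" using one_le_s one_le_C12 by (intro mult_mono) auto
  then have "\<bar>sin ((x - xs) / 2)\<bar> * real n / (2 * real s * C12) \<le> \<bar>sin ((x - xs) / 2)\<bar> * real n / 1"
    by (intro divide_left_mono) (use one_le_s C12_pos in auto)
  then have "1 + \<bar>sin ((x - xs) / 2)\<bar> / (2 * real s * C12 / real n) \<le> 2 / delta_n n x xs"
    using one_add_le_two_div_delta_n[of n x xs] by (simp add: mult.commute)
  then have "(1 + \<bar>sin ((x - xs) / 2)\<bar> / (2 * real s * C12 / real n)) ^ (2 * s) \<le> (2 / delta_n n x xs) ^ (2 * s)"
    using divide_nonneg_pos[OF abs_ge_zero separation_pos, of "sin ((x - xs) / 2)"] by (intro power_mono) auto
  moreover have "\<bar>Pi_Y s y (xs + (x - xs)) / Pi_Y s y xs\<bar>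
      \<le> (1 + \<bar>sin ((x - xs) / 2)\<bar> / (2 * real s * C12 / real n)) ^ (2 * s)"
    by (rule abs_Pi_Y_ratio_le[OF separation_pos abs_sin_half_node_ge])
  ultimately show ?thesis by simp
qed

text \<open>The product ratio grows at most like \<open>\<delta>\<^sup>-\<^sup>2\<^sup>s\<close>, eating \<open>2 s\<close> of the \<open>2 l\<close> powers of
  \<open>\<delta>\<close> in the kernel bound.\<close>
lemma abs_integrand_le: "\<bar>integrand x\<bar> \<le> jackson_const s l * real n * delta_n n x xs ^ (2 * (l - s))"
proof -
  define \<delta> where "\<delta> = delta_n n x xs"
  have \<delta>: "0 < \<delta>" unfolding \<delta>_def by (rule delta_n_pos)
  have "J_ln l n (x - xs) \<le> (pi / 2) ^ (2 * l) / (2 * pi) * real n * \<delta> ^ (2 * l)"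
    using J_ln_le[OF one_le_n, of l "x - xs"] unfolding \<delta>_def delta_n_shift[of n x] .
  then have "\<bar>integrand x\<bar> \<le> (pi / 2) ^ (2 * l) / (2 * pi) * real n * \<delta> ^ (2 * l) * (2 / \<delta>) ^ (2 * s)"
    unfolding integrand_def abs_mult \<delta>_def using J_ln_nonneg[OF one_le_n] abs_Pi_Y_ratio_le_delta_n
    by (intro mult_mono) auto
  also have "\<dots> = jackson_const s l * real n * \<delta> ^ (2 * (l - s))"
  proof -
    have "2 * l = 2 * s + 2 * (l - s)" using s_less_l by simp
    then have "\<delta> ^ (2 * l) = \<delta> ^ (2 * s) * \<delta> ^ (2 * (l - s))" by (metis power_add)
    moreover have "(2::real) ^ (2 * s) = 4 ^ s" by (simp add: power_mult)
    ultimately show ?thesis unfolding jackson_const_def using \<delta>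
      by (simp add: power_divide field_simps)
  qed
  finally show ?thesis unfolding \<delta>_def .
qed

lemma abs_deriv_T_le: "\<bar>deriv T x\<bar> \<le> 2 * jackson_const s l * real n * delta_n n x xs ^ (2 * (l - s))"
proof -
  have "\<bar>deriv T x\<bar> = \<bar>integrand x\<bar> / d" unfolding deriv_T using d_bounds by (simp add: abs_divide)
  also have "\<dots> \<le> \<bar>integrand x\<bar> / (1/2)" using d_bounds by (intro divide_left_mono) auto
  finally show ?thesis using abs_integrand_le[of x] by simp
qed

lemma abs_deriv_T_ge:
  assumes "x \<in> {xs + 2 * pi * of_int k / real n + pi / (2 * real n) ..
                   xs + 2 * pi * of_int k / real n + 2 * pi / real n - pi / (2 * real n)}"
  shows "1 / (6 * 2 ^ l * pi ^ 3) * real n * delta_n n x xs ^ (2 * l) * \<bar>Pi_Y s y x / Pi_Y s y xs\<bar>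
    \<le> \<bar>deriv T x\<bar>"
proof -
  define L where "L = real n * delta_n n x xs ^ (2 * l) / (2 ^ l * (4 * pi ^ 3))"
  have "real n * (2 * pi * of_int k / real n + pi / (2 * real n)) \<le> real n * (x - xs)"
    "real n * (x - xs) \<le> real n * (2 * pi * of_int k / real n + 2 * pi / real n - pi / (2 * real n))"
    using assms by (intro mult_left_mono; simp)+
  moreover have "real n * (2 * pi * of_int k / real n + pi / (2 * real n)) = 2 * pi * of_int k + pi / 2"
    "real n * (2 * pi * of_int k / real n + 2 * pi / real n - pi / (2 * real n)) = 2 * pi * of_int k + 3 * pi / 2"
    using one_le_n by (simp_all add: field_simps)
  ultimately have "L \<le> J_ln l n (x - xs)"
    using J_ln_ge[OF one_le_n one_le_l sin_half_squared_ge_half]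
    unfolding L_def delta_n_shift[of n x] by (simp add: mult.commute)
  then have "L * \<bar>Pi_Y s y x / Pi_Y s y xs\<bar> / (3/2) \<le> J_ln l n (x - xs) * \<bar>Pi_Y s y x / Pi_Y s y xs\<bar> / d"
    using d_bounds L_def by (intro frac_le mult_right_mono mult_nonneg_nonneg J_ln_nonneg one_le_n) auto
  also have "\<dots> = \<bar>deriv T x\<bar>"
    unfolding deriv_T integrand_def using d_bounds J_ln_nonneg[OF one_le_n, of l "x - xs"]
    by (simp add: abs_mult abs_divide)
  finally show ?thesis unfolding L_def by (simp add: field_simps)
qed

abbreviation (input) tail_const where "tail_const \<equiv> jackson_const s l * (2 * pi) ^ (2 * (l - s))"

lemma abs_integrand_le_decay:
  assumes "\<bar>t - xs\<bar> \<le> pi"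
  shows "\<bar>integrand t\<bar> \<le> tail_const * real n / (1 + real n * \<bar>t - xs\<bar>) ^ (2 * (l - s))"
proof -
  have "\<bar>integrand t\<bar> \<le> jackson_const s l * real n * delta_n n t xs ^ (2 * (l - s))"
    by (rule abs_integrand_le)
  also have "\<dots> \<le> jackson_const s l * real n * (2 * pi / (1 + real n * \<bar>t - xs\<bar>)) ^ (2 * (l - s))"
    using delta_n_le[OF assms, of n] delta_n_pos[of n t xs] jackson_const_pos[of s l]
    by (intro mult_left_mono power_mono) auto
  finally show ?thesis by (simp add: power_divide mult_ac)
qed

lemma tail_const_div_le:
  "tail_const / (1 + real n * \<bar>x - xs\<bar>) ^ (2 * (l - s) - 1) \<le> tail_const * delta_n n x xs ^ (2 * (l - s) - 1)"
proof -
  have "(1 / (1 + real n * \<bar>x - xs\<bar>)) ^ (2 * (l - s) - 1) \<le> delta_n n x xs ^ (2 * (l - s) - 1)"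
    using delta_n_ge[of n x xs] by (intro power_mono) (auto intro: add_pos_nonneg less_imp_le)
  from mult_left_mono[OF this, of tail_const] show ?thesis
    using jackson_const_pos[of s l] by (simp add: power_divide)
qed

lemma abs_F_le_left:
  assumes "xs - pi \<le> x" "x \<le> xs"
  shows "\<bar>F x\<bar> \<le> tail_const * delta_n n x xs ^ (2 * (l - s) - 1)"
proof -
  have "\<bar>F (xs + (x - xs)) - F (xs - pi)\<bar> \<le> tail_const / (1 + real n * \<bar>x - xs\<bar>) ^ (2 * (l - s) - 1)"
  proof (rule abs_diff_le_of_deriv_decay_left[OF has_real_derivative_F])
    fix t assume "t \<in> {xs - pi..xs + (x - xs)}"
    then have le: "\<bar>t - xs\<bar> \<le> pi" and eq: "\<bar>t - xs\<bar> = xs - t" using assms by auto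
    show "\<bar>integrand t\<bar> \<le> tail_const * real n / (1 + real n * (xs - t)) ^ (2 * (l - s))"
      using abs_integrand_le_decay[OF le] unfolding eq .
  qed (use assms s_less_l jackson_const_pos[of s l] in auto)
  then show ?thesis using F_left_end tail_const_div_le[of x] by simp
qed

lemma abs_d_sub_F_le_right:
  assumes "xs \<le> x" "x \<le> xs + pi"
  shows "\<bar>d - F x\<bar> \<le> tail_const * delta_n n x xs ^ (2 * (l - s) - 1)"
proof -
  have "\<bar>F (xs + pi) - F (xs + (x - xs))\<bar> \<le> tail_const / (1 + real n * (x - xs)) ^ (2 * (l - s) - 1)"
  proof (rule abs_diff_le_of_deriv_decay_right[OF has_real_derivative_F])
    fix t assume "t \<in> {xs + (x - xs)..xs + pi}"
    then have le: "\<bar>t - xs\<bar> \<le> pi" and eq: "\<bar>t - xs\<bar> = t - xs" using assms by auto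
    show "\<bar>integrand t\<bar> \<le> tail_const * real n / (1 + real n * (t - xs)) ^ (2 * (l - s))"
      using abs_integrand_le_decay[OF le] unfolding eq .
  qed (use assms s_less_l jackson_const_pos[of s l] in auto)
  then show ?thesis using d_eq_F tail_const_div_le[of x] assms by simp
qed

text \<open>Away from \<open>[xs - pi, xs + pi]\<close> the estimates transfer by the quasi-periodicity
  \<open>F (x + 2 pi) = F x + d\<close> and the \<open>2 pi\<close>-periodicity of \<open>\<delta>\<^sub>n\<close>.\<close>
lemma abs_chi_sub_T_le:
  assumes "\<bar>x - xs\<bar> \<le> 2 * pi"
  shows "\<bar>chi x xs - T x\<bar> \<le> 2 * tail_const * delta_n n x xs ^ (2 * (l - s) - 1)"
proof -
  define b where "b = tail_const * delta_n n x xs ^ (2 * (l - s) - 1)"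
  have main: "\<bar>chi x xs * d - F x\<bar> \<le> b"
  proof (cases "x \<le> xs")
    case True
    show ?thesis
    proof (cases "xs - pi \<le> x")
      case False
      then have "\<bar>d - F (x + 2 * pi)\<bar> \<le> b"
        using abs_d_sub_F_le_right[of "x + 2 * pi"] assms True unfolding b_def delta_n_add_2pi by simp
      then show ?thesis using True F_add_2pi[of x] unfolding chi_def by simp
    qed (use True abs_F_le_left[of x] in \<open>simp add: chi_def b_def\<close>)
  next
    case False
    show ?thesis
    proof (cases "x \<le> xs + pi")
      case False
      then have "\<bar>F (x - 2 * pi)\<bar> \<le> b"
        using abs_F_le_left[of "x - 2 * pi"] assms unfolding b_def delta_n_diff_2pi by simp
      then show ?thesis using \<open>\<not> x \<le> xs\<close> F_add_2pi[of "x - 2 * pi"] unfolding chi_def by simp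
    qed (use False abs_d_sub_F_le_right[of x] in \<open>simp add: chi_def b_def\<close>)
  qed
  have "chi x xs - T x = (chi x xs * d - F x) / d"
    unfolding T_eq_F_div_d using d_bounds by (simp add: field_simps)
  then have "\<bar>chi x xs - T x\<bar> = \<bar>chi x xs * d - F x\<bar> / d" using d_bounds by (simp add: abs_divide)
  also have "\<dots> \<le> \<bar>chi x xs * d - F x\<bar> / (1/2)" using d_bounds by (intro divide_left_mono) auto
  also have "\<dots> \<le> 2 * b" using main by simp
  finally show ?thesis unfolding b_def by (simp add: mult.assoc)
qed

lemma T_properties:
  "(1/2 < d \<and> d < 3/2)
   \<and> trig_poly (l * (n - 1) + s) (\<lambda>x. T x - x / (2 * pi))
   \<and> (\<forall>x. Pi_Y s y xs * deriv T x * Pi_Y s y x \<ge> 0)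
   \<and> (\<forall>x. \<bar>deriv T x\<bar> \<le> 2 * jackson_const s l * real n * delta_n n x xs ^ (2 * (l - s)))
   \<and> (\<forall>x \<in> (\<Union>\<nu>::int. {xs + 2 * pi * of_int \<nu> / real n + pi / (2 * real n) ..
                          xs + 2 * pi * of_int \<nu> / real n + 2 * pi / real n - pi / (2 * real n)}).
        \<bar>deriv T x\<bar> \<ge> (1 / (6 * 2 ^ l * pi ^ 3)) * real n * delta_n n x xs ^ (2 * l)
                          * \<bar>Pi_Y s y x / Pi_Y s y xs\<bar>)
   \<and> (\<forall>x. \<bar>x - xs\<bar> \<le> 2 * pi \<longrightarrow>
        \<bar>chi x xs - T x\<bar> \<le> 2 * (jackson_const s l * (2 * pi) ^ (2 * (l - s))) * delta_n n x xs ^ (2 * (l - s) - 1))"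
proof (intro conjI allI impI ballI)
  fix x
  show "\<bar>deriv T x\<bar> \<ge> (1 / (6 * 2 ^ l * pi ^ 3)) * real n * delta_n n x xs ^ (2 * l)
                          * \<bar>Pi_Y s y x / Pi_Y s y xs\<bar>"
    if "x \<in> (\<Union>\<nu>::int. {xs + 2 * pi * of_int \<nu> / real n + pi / (2 * real n) ..
                          xs + 2 * pi * of_int \<nu> / real n + 2 * pi / real n - pi / (2 * real n)})"
    using that abs_deriv_T_ge by blast
qed (use d_bounds T_sub_linear_trig_poly Pi_Y_mult_deriv_T_mult_Pi_Y_nonneg abs_deriv_T_le
      abs_chi_sub_T_le in auto)

end

theorem lemma5:
  fixes s l :: nat and C12 :: real
  assumes "1 \<le> s" and "s < l" and "C12 > 0"
    and C12: "\<forall>n::nat. n \<ge> 1 \<longrightarrow> (\<forall>\<nu>::nat. \<nu> \<le> 2 * l - 2 \<longrightarrow>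
               integral {-pi..pi} (\<lambda>t. (1 + real n * \<bar>t\<bar>) ^ \<nu> * J_ln l n t) \<le> C12)"
  shows "\<exists>C13 C14 C15 :: real. C13 > 0 \<and> C14 > 0 \<and> C15 > 0 \<and>
    (\<forall>(n::nat) (y::nat \<Rightarrow> real) (xs::real).
       n \<ge> 1 \<longrightarrow>
       (\<forall>i. 1 \<le> i \<and> i < 2 * s \<longrightarrow> y (Suc i) < y i) \<longrightarrow>
       - pi \<le> y (2 * s) \<longrightarrow> y 1 < pi \<longrightarrow>
       (\<forall>i::int. \<bar>xs - yext s y i\<bar> \<ge> 2 * real s * C12 * pi / real n) \<longrightarrow>
       (1/2 < d_ln l n xs s y \<and> d_ln l n xs s y < 3/2)
       \<and> trig_poly (l * (n - 1) + s) (\<lambda>x. T_ln l n xs s y x - x / (2 * pi))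
       \<and> (\<forall>x. Pi_Y s y xs * deriv (T_ln l n xs s y) x * Pi_Y s y x \<ge> 0)
       \<and> (\<forall>x. \<bar>deriv (T_ln l n xs s y) x\<bar> \<le> C13 * real n * delta_n n x xs ^ (2 * (l - s)))
       \<and> (\<forall>x \<in> (\<Union>\<nu>::int. {xs + 2 * pi * of_int \<nu> / real n + pi / (2 * real n) ..
                              xs + 2 * pi * of_int \<nu> / real n + 2 * pi / real n - pi / (2 * real n)}).
            \<bar>deriv (T_ln l n xs s y) x\<bar> \<ge>
              (1 / C14) * real n * delta_n n x xs ^ (2 * l) * \<bar>Pi_Y s y x / Pi_Y s y xs\<bar>)
       \<and> (\<forall>x. \<bar>x - xs\<bar> \<le> 2 * pi \<longrightarrow>
            \<bar>chi x xs - T_ln l n xs s y x\<bar> \<le> C15 * delta_n n x xs ^ (2 * (l - s) - 1)))"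
proof -
  define C13 where "C13 = 2 * jackson_const s l"
  define C14 :: real where "C14 = 6 * 2 ^ l * pi ^ 3"
  define C15 where "C15 = 2 * (jackson_const s l * (2 * pi) ^ (2 * (l - s)))"
  have pos: "0 < C13" "0 < C14" "0 < C15"
    unfolding C13_def C14_def C15_def using jackson_const_pos[of s l] by auto
  show ?thesis
  proof (rule exI[of _ C13], rule exI[of _ C14], rule exI[of _ C15], intro conjI pos, intro allI impI,
      goal_cases)
    case (1 n y xs)
    then interpret jackson_setting s l n C12 xs y
      using assms by unfold_locales auto
    show ?case using T_properties unfolding C13_def C14_def C15_def .
  qed
qed

end
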